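(* Let $O$ be a set of Boolean functions. If $O\preceq\{\land,\top,\bot\}$ or $O\preceq\{\lor,\top,\bot\}$ or $O\preceq\{\neg,\bot\}$, then every $\mathrm{PL}_O$-formula $\phi$ is uniquely characterized with respect to $\mathrm{PL}_O$ by a set of at most $|\phi|_{\mathrm{dag}}+1$ labeled examples. Otherwise, there is no polynomial $p$ such that every $\mathrm{PL}_O$-formula $\phi$ is uniquely characterized with respect to $\mathrm{PL}_O$ by a set of at most $p(|\phi|_{\mathrm{dag}})$ labeled examples.
   Context: A Boolean function is a map $\{0,1\}^n\to\{0,1\}$ with $n\ge 1$; the constants $\top,\bot$ are treated as constant unary Boolean functions; $\land,\lor,\neg$ are the usual Boolean functions. For a set $O$ of Boolean functions, $\langle O\rangle$ is the smallest set of Boolean functions containing $O$ and all projections and closed under composition; $O\preceq O'$ means $\langle O\rangle\subseteq\langle O'\rangle$. Fix a countably infinite set of propositional variables. $\mathrm{PL}_O$ is the set of formulas generated by $\phi::=x\mid f(\phi_1,\dots,\phi_n)$ with $x$ a variable and $f\in O$ of arity $n$, with the obvious semantics under truth assignments $V$; two formulas are equivalent if they agree under every truth assignment. $|\phi|_{\mathrm{dag}}$ is the number of distinct subformulas of $\phi$. A labeled example is a pair $(V,\mathrm{lab})$ with $V$ a truth assignment and $\mathrm{lab}\in\{0,1\}$; $\phi$ fits it if $\phi$ evaluates to $\mathrm{lab}$ under $V$. A set $E$ of labeled examples uniquely characterizes $\phi$ with respect to $\mathrm{PL}_O$ if $\phi$ fits all of $E$ and every $\mathrm{PL}_O$-formula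 fitting all of $E$ is equivalent to $\phi$. *)

theory Defs
  imports Main "HOL-Computational_Algebra.Polynomial"
begin

text \<open>A Boolean function of arity n is represented as a pair (n, f) with
  f :: bool list => bool, n >= 1, and f canonically False on lists whose
  length is not n (so that equality of representations is extensional).\<close>

type_synonym bfun = "nat \<times> (bool list \<Rightarrow> bool)"

definition bfun_wf :: "bfun \<Rightarrow> bool" where
  "bfun_wf g \<longleftrightarrow> fst g \<ge> 1 \<and> (\<forall>xs. length xs \<noteq> fst g \<longrightarrow> \<not> snd g xs)"

definition bproj :: "nat \<Rightarrow> nat \<Rightarrow> bfun" where
  "bproj n i = (n, \<lambda>xs. length xs = n \<and> xs ! i)"

definition bcomp :: "nat \<Rightarrow> bfun \<Rightarrow> bfun list \<Rightarrow> bfun" where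
  "bcomp n f gs = (n, \<lambda>xs. length xs = n \<and> snd f (map (\<lambda>g. snd g xs) gs))"

inductive_set clone :: "bfun set \<Rightarrow> bfun set" for Ops where
  base: "g \<in> Ops \<Longrightarrow> g \<in> clone Ops"
| proj: "1 \<le> n \<Longrightarrow> i < n \<Longrightarrow> bproj n i \<in> clone Ops"
| comp: "f \<in> clone Ops \<Longrightarrow> length gs = fst f \<Longrightarrow> 1 \<le> n \<Longrightarrow>
         (\<forall>g\<in>set gs. g \<in> clone Ops \<and> fst g = n) \<Longrightarrow> bcomp n f gs \<in> clone Ops"

definition clone_le :: "bfun set \<Rightarrow> bfun set \<Rightarrow> bool" (infix "\<preceq>\<^sub>c" 50) where
  "Ops \<preceq>\<^sub>c Ops' \<longleftrightarrow> clone Ops \<subseteq> clone Ops'"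

definition band :: bfun where "band = (2, \<lambda>xs. length xs = 2 \<and> xs ! 0 \<and> xs ! 1)"
definition bor :: bfun where "bor = (2, \<lambda>xs. length xs = 2 \<and> (xs ! 0 \<or> xs ! 1))"
definition bneg :: bfun where "bneg = (1, \<lambda>xs. length xs = 1 \<and> \<not> xs ! 0)"
definition btop :: bfun where "btop = (1, \<lambda>xs. length xs = 1)"
definition bbot :: bfun where "bbot = (1, \<lambda>xs. False)"

datatype form = Var nat | App bfun "form list"

fun in_PL :: "bfun set \<Rightarrow> form \<Rightarrow> bool" where
  "in_PL Ops (Var x) = True"
| "in_PL Ops (App f args) = (f \<in> Ops \<and> length args = fst f \<and> (\<forall>a\<in>set args. in_PL Ops a))"

fun eval :: "(nat \<Rightarrow> bool) \<Rightarrow> form \<Rightarrow> bool" where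
  "eval V (Var x) = V x"
| "eval V (App f args) = snd f (map (eval V) args)"

definition equiv_form :: "form \<Rightarrow> form \<Rightarrow> bool" where
  "equiv_form \<phi> \<psi> \<longleftrightarrow> (\<forall>V. eval V \<phi> = eval V \<psi>)"

fun subforms :: "form \<Rightarrow> form set" where
  "subforms (Var x) = {Var x}"
| "subforms (App f args) = insert (App f args) (\<Union>a\<in>set args. subforms a)"

definition dag_size :: "form \<Rightarrow> nat" where
  "dag_size \<phi> = card (subforms \<phi>)"

type_synonym example = "(nat \<Rightarrow> bool) \<times> bool"

definition fits :: "form \<Rightarrow> example \<Rightarrow> bool" where
  "fits \<phi> e \<longleftrightarrow> eval (fst e) \<phi> = snd e"

definition uniquely_characterizes :: "bfun set \<Rightarrow> example set \<Rightarrow> form \<Rightarrow> bool" where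
  "uniquely_characterizes Ops E \<phi> \<longleftrightarrow>
     (\<forall>e\<in>E. fits \<phi> e) \<and> (\<forall>\<psi>. in_PL Ops \<psi> \<and> (\<forall>e\<in>E. fits \<psi> e) \<longrightarrow> equiv_form \<psi> \<phi>)"

end

theory Submission
  imports Defs
begin

text \<open>
  The three small clones consist of the functions that preserve conjunction, that preserve
  disjunction, and that depend on at most one variable, and every formula over such operations
  inherits the property. A conjunction-preserving function of the variables of \<phi> is constant
  false or the conjunction of a set S of them, and among conjunction-preserving functions it is
  determined by the example that makes exactly S true together with, for every x in S, the
  example that makes only x false: at most |vars \<phi>| + 1 examples. Disjunction is dual, and an
  essentially unary function is determined by two examples.

  If Ops lies below none of the three clones, a case analysis along Post's lattice shows that it
  defines the majority function, x + y + z (mod 2), x \<and> (y \<or> z) or x \<or> (y \<and> z). With parity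
  even a single variable has no finite characterization. Each of the other three functions gives
  binary gadgets that act as conjunction and disjunction for suitable values of two parameter
  variables; they build formulas of size linear in n computing (x0 \<and> y0) \<or> ... \<or> (xn \<and> yn),
  and every characterizing set of such a formula needs 2^(n+1) examples, one for each way of
  adding a clause that picks x_i or y_i for every i.
\<close>

section \<open>Substitution and definable functions\<close>

fun vars :: "form \<Rightarrow> nat set" where
  "vars (Var x) = {x}"
| "vars (App f args) = (\<Union>a\<in>set args. vars a)"

fun subst :: "(nat \<Rightarrow> form) \<Rightarrow> form \<Rightarrow> form" where
  "subst \<sigma> (Var x) = \<sigma> x"
| "subst \<sigma> (App f args) = App f (map (subst \<sigma>) args)"

lemma eval_subst: "eval V (subst \<sigma> \<phi>) = eval (\<lambda>v. eval V (\<sigma> v)) \<phi>"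
  by (induction \<phi>) (auto simp: o_def cong: map_cong)

lemma in_PL_subst: "in_PL Ops \<phi> \<Longrightarrow> (\<And>v. in_PL Ops (\<sigma> v)) \<Longrightarrow> in_PL Ops (subst \<sigma> \<phi>)"
  by (induction \<phi>) auto

lemma eval_cong: "(\<And>x. x \<in> vars \<phi> \<Longrightarrow> V x = W x) \<Longrightarrow> eval V \<phi> = eval W \<phi>"
proof (induction \<phi>)
  case (App f args)
  then have "map (eval V) args = map (eval W) args" by auto
  then show ?case by (simp del: map_eq_conv)
qed simp

lemma finite_vars: "finite (vars \<phi>)"
  by (induction \<phi>) auto

lemma finite_subforms: "finite (subforms \<phi>)"
  by (induction \<phi>) auto

lemma Var_vars_subset_subforms: "Var ` vars \<phi> \<subseteq> subforms \<phi>"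
  by (induction \<phi>) auto

lemma self_in_subforms: "\<phi> \<in> subforms \<phi>"
  by (cases \<phi>) auto

lemma card_vars_le_dag_size: "card (vars \<phi>) \<le> dag_size \<phi>"
proof -
  have "card (vars \<phi>) = card (Var ` vars \<phi>)" by (simp add: card_image inj_on_def)
  also have "\<dots> \<le> card (subforms \<phi>)" by (intro card_mono finite_subforms Var_vars_subset_subforms)
  finally show ?thesis unfolding dag_size_def .
qed

lemma dag_size_pos: "0 < dag_size \<phi>"
  unfolding dag_size_def using finite_subforms self_in_subforms card_gt_0_iff by blast

lemma subforms_subst:
  "subforms (subst \<sigma> \<phi>) \<subseteq> subst \<sigma> ` subforms \<phi> \<union> (\<Union>v\<in>vars \<phi>. subforms (\<sigma> v))"
  by (induction \<phi>) fastforce+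

definition definable :: "bfun set \<Rightarrow> ((nat \<Rightarrow> bool) \<Rightarrow> bool) \<Rightarrow> bool" where
  "definable Ops F \<longleftrightarrow> (\<exists>\<psi>. in_PL Ops \<psi> \<and> (\<forall>V. eval V \<psi> = F V))"

lemma definable_Var: "definable Ops (\<lambda>V. V x)"
  unfolding definable_def by (intro exI[of _ "Var x"]) auto

lemma definable_subst:
  assumes "definable Ops F" "\<And>v. definable Ops (G v)"
  shows "definable Ops (\<lambda>V. F (\<lambda>v. G v V))"
proof -
  obtain \<psi> where \<psi>: "in_PL Ops \<psi>" "\<And>V. eval V \<psi> = F V"
    using assms(1) unfolding definable_def by blast
  obtain \<sigma> where \<sigma>: "\<And>v. in_PL Ops (\<sigma> v)" "\<And>v V. eval V (\<sigma> v) = G v V"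
    using assms(2) unfolding definable_def by metis
  show ?thesis unfolding definable_def
    by (intro exI[of _ "subst \<sigma> \<psi>"]) (simp add: in_PL_subst \<psi> \<sigma> eval_subst)
qed

definition definable3 :: "bfun set \<Rightarrow> (bool \<Rightarrow> bool \<Rightarrow> bool \<Rightarrow> bool) \<Rightarrow> bool" where
  "definable3 Ops f \<longleftrightarrow> definable Ops (\<lambda>V. f (V 0) (V 1) (V 2))"

lemma definable3_subst:
  assumes "definable Ops F" "\<And>v. definable3 Ops (\<sigma> v)"
  shows "definable3 Ops (\<lambda>x y z. F (\<lambda>v. \<sigma> v x y z))"
  using definable_subst[OF assms(1), of "\<lambda>v V. \<sigma> v (V 0) (V 1) (V 2)"] assms(2)
  unfolding definable3_def by simp

lemma definable3_arg1: "definable3 Ops (\<lambda>x y z. x)"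
  and definable3_arg2: "definable3 Ops (\<lambda>x y z. y)"
  and definable3_arg3: "definable3 Ops (\<lambda>x y z. z)"
  unfolding definable3_def by (rule definable_Var)+

lemma definable3_comp:
  assumes "definable3 Ops g" "definable3 Ops a" "definable3 Ops b" "definable3 Ops c"
  shows "definable3 Ops (\<lambda>x y z. g (a x y z) (b x y z) (c x y z))"
proof -
  define \<sigma> where "\<sigma> v = (if v = 0 then a else if v = 1 then b else c)" for v :: nat
  have "definable3 Ops (\<sigma> v)" for v
    using assms(2-4) unfolding \<sigma>_def by simp
  with assms(1) have "definable3 Ops (\<lambda>x y z. (\<lambda>V. g (V 0) (V 1) (V 2)) (\<lambda>v. \<sigma> v x y z))"
    unfolding definable3_def[of _ g] by (rule definable3_subst)
  then show ?thesis by (simp add: \<sigma>_def)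
qed

lemma definable3_cong:
  assumes "definable3 Ops f" "\<forall>x y z. f x y z = g x y z"
  shows "definable3 Ops g"
proof -
  from assms(2) have "f = g" by (simp add: fun_eq_iff)
  with assms(1) show ?thesis by simp
qed

section \<open>Characterizing conjunctive, disjunctive and essentially unary functions\<close>

definition preserves :: "(bool \<Rightarrow> bool \<Rightarrow> bool) \<Rightarrow> ((nat \<Rightarrow> bool) \<Rightarrow> bool) \<Rightarrow> bool" where
  "preserves op F \<longleftrightarrow> (\<forall>V W. F (\<lambda>v. op (V v) (W v)) = op (F V) (F W))"

definition depends_only_on :: "nat set \<Rightarrow> ((nat \<Rightarrow> bool) \<Rightarrow> bool) \<Rightarrow> bool" where
  "depends_only_on X F \<longleftrightarrow> (\<forall>V W. (\<forall>x\<in>X. V x = W x) \<longrightarrow> F V = F W)"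

definition essentially_unary :: "((nat \<Rightarrow> bool) \<Rightarrow> bool) \<Rightarrow> bool" where
  "essentially_unary F \<longleftrightarrow> (\<exists>c. \<forall>V. F V = c) \<or> (\<exists>x b. \<forall>V. F V = (V x = b))"

definition characterizes_within ::
    "(((nat \<Rightarrow> bool) \<Rightarrow> bool) \<Rightarrow> bool) \<Rightarrow> example set \<Rightarrow> ((nat \<Rightarrow> bool) \<Rightarrow> bool) \<Rightarrow> bool" where
  "characterizes_within P E F \<longleftrightarrow>
     (\<forall>e\<in>E. F (fst e) = snd e) \<and> (\<forall>G. P G \<and> (\<forall>e\<in>E. G (fst e) = snd e) \<longrightarrow> G = F)"

lemma mono_boolD:
  assumes "mono F" "F V" "\<And>v. V v \<Longrightarrow> W v"
  shows "F W"
proof -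
  from assms(3) have "V \<le> W" by (simp add: le_fun_def)
  from monoD[OF assms(1) this] assms(2) show ?thesis by (simp add: le_bool_def)
qed

lemma mono_if_preserves_conj: "preserves (\<and>) F \<Longrightarrow> mono F"
proof (rule monoI)
  fix V W :: "nat \<Rightarrow> bool"
  assume "preserves (\<and>) F" "V \<le> W"
  moreover from \<open>V \<le> W\<close> have "(\<lambda>v. V v \<and> W v) = V" by (auto simp: le_fun_def)
  ultimately show "F V \<le> F W" unfolding preserves_def le_bool_def by metis
qed

lemma preserves_conj_Inter:
  assumes "preserves (\<and>) F" "F (\<lambda>_. True)" "finite A" "\<forall>x\<in>A. F (\<lambda>v. v \<noteq> x)"
  shows "F (\<lambda>v. v \<notin> A)"
  using assms(3,4)
proof (induction A rule: finite_induct)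
  case (insert a A)
  have "(\<lambda>v. v \<notin> insert a A) = (\<lambda>v. v \<noteq> a \<and> v \<notin> A)" by auto
  with insert assms(1) show ?case unfolding preserves_def by simp
qed (use assms(2) in simp)

text \<open>The conjuncts are the variables x whose single falsification \<open>\<lambda>v. v \<noteq> x\<close> falsifies F.\<close>

lemma preserves_conj_normal_form:
  assumes F: "preserves (\<and>) F" and X: "depends_only_on X F" "finite X"
  shows "F = (\<lambda>_. False) \<or> (\<exists>S\<subseteq>X. F = (\<lambda>V. \<forall>x\<in>S. V x))"
proof (cases "F (\<lambda>_. True)")
  case False
  have "\<not> F V" for V
    using mono_boolD[OF mono_if_preserves_conj[OF F], of V "\<lambda>_. True"] False by auto
  then show ?thesis by auto
next
  case True
  define S where "S = {x\<in>X. \<not> F (\<lambda>v. v \<noteq> x)}"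
  have "F V = (\<forall>x\<in>S. V x)" for V
  proof
    assume "F V"
    show "\<forall>x\<in>S. V x"
    proof (rule ccontr)
      assume "\<not> (\<forall>x\<in>S. V x)"
      then obtain x where "x \<in> S" "\<not> V x" by blast
      with \<open>F V\<close> have "F (\<lambda>v. v \<noteq> x)"
        by (intro mono_boolD[OF mono_if_preserves_conj[OF F] \<open>F V\<close>]) auto
      with \<open>x \<in> S\<close> show False unfolding S_def by simp
    qed
  next
    assume V: "\<forall>x\<in>S. V x"
    define A where "A = {x\<in>X. \<not> V x}"
    have "F (\<lambda>v. v \<notin> A)"
      by (rule preserves_conj_Inter[OF F True]) (use V X(2) in \<open>auto simp: A_def S_def\<close>)
    moreover have "F V = F (\<lambda>v. v \<notin> A)"
      using X(1) unfolding depends_only_on_def A_def by auto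
    ultimately show "F V" by simp
  qed
  then have "F = (\<lambda>V. \<forall>x\<in>S. V x)" by (simp add: fun_eq_iff)
  moreover have "S \<subseteq> X" unfolding S_def by blast
  ultimately show ?thesis by blast
qed

lemma characterizes_within_conj_False:
  "characterizes_within (preserves (\<and>)) {((\<lambda>_. True), False)} (\<lambda>_. False)"
proof -
  have "G = (\<lambda>_. False)" if "preserves (\<and>) G" "\<not> G (\<lambda>_. True)" for G
  proof
    fix V
    show "G V = False"
      using mono_boolD[OF mono_if_preserves_conj[OF that(1)], of V "\<lambda>_. True"] that(2) by auto
  qed
  then show ?thesis unfolding characterizes_within_def by auto
qed

lemma characterizes_within_conj_Ball:
  "characterizes_within (preserves (\<and>))
     (insert ((\<lambda>v. v \<in> S), True) ((\<lambda>x. ((\<lambda>v. v \<noteq> x), False)) ` S)) (\<lambda>V. \<forall>x\<in>S. V x)"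
  (is "characterizes_within _ ?E _")
proof -
  have "G = (\<lambda>V. \<forall>x\<in>S. V x)" if G: "preserves (\<and>) G" "\<forall>e\<in>?E. G (fst e) = snd e" for G
  proof
    fix V
    note G_mono = mono_boolD[OF mono_if_preserves_conj[OF G(1)]]
    show "G V = (\<forall>x\<in>S. V x)"
    proof (cases "\<forall>x\<in>S. V x")
      case True
      have "G (\<lambda>v. v \<in> S)" using G(2) by auto
      with True show ?thesis using G_mono[of "\<lambda>v. v \<in> S" V] by auto
    next
      case False
      then obtain x where "x \<in> S" "\<not> V x" by blast
      moreover have "\<not> G (\<lambda>v. v \<noteq> x)" using G(2) \<open>x \<in> S\<close> by auto
      ultimately show ?thesis using G_mono[of V "\<lambda>v. v \<noteq> x"] by auto
    qed
  qed
  then show ?thesis unfolding characterizes_within_def by auto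
qed

lemma preserves_conj_characterization:
  assumes "preserves (\<and>) F" "depends_only_on X F" "finite X"
  obtains E where "finite E" "card E \<le> card X + 1" "characterizes_within (preserves (\<and>)) E F"
  using preserves_conj_normal_form[OF assms]
proof (elim disjE exE conjE)
  assume "F = (\<lambda>_. False)"
  with characterizes_within_conj_False show thesis by (intro that) auto
next
  fix S assume "S \<subseteq> X" and F: "F = (\<lambda>V. \<forall>x\<in>S. V x)"
  define E where "E = insert ((\<lambda>v. v \<in> S), True) ((\<lambda>x. ((\<lambda>v. v \<noteq> x), False)) ` S)"
  have "finite S" using \<open>S \<subseteq> X\<close> assms(3) finite_subset by blast
  have "card E \<le> Suc (card ((\<lambda>x. ((\<lambda>v. v \<noteq> x), False)) ` S))"
    unfolding E_def using \<open>finite S\<close> by (simp add: card_insert_if)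
  also have "\<dots> \<le> Suc (card S)" using card_image_le[OF \<open>finite S\<close>] by simp
  also have "\<dots> \<le> card X + 1" using card_mono[OF assms(3) \<open>S \<subseteq> X\<close>] by simp
  finally have "card E \<le> card X + 1" .
  moreover have "characterizes_within (preserves (\<and>)) E F"
    unfolding F E_def by (rule characterizes_within_conj_Ball)
  ultimately show thesis using \<open>finite S\<close> by (intro that) (simp_all add: E_def)
qed

definition dual :: "((nat \<Rightarrow> bool) \<Rightarrow> bool) \<Rightarrow> (nat \<Rightarrow> bool) \<Rightarrow> bool" where
  "dual F = (\<lambda>V. \<not> F (\<lambda>v. \<not> V v))"

lemma dual_dual [simp]: "dual (dual F) = F"
  by (simp add: dual_def)

lemma preserves_disj_iff_dual: "preserves (\<or>) F \<longleftrightarrow> preserves (\<and>) (dual F)"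
proof
  assume F: "preserves (\<or>) F"
  show "preserves (\<and>) (dual F)" unfolding preserves_def
  proof (intro allI)
    fix V W :: "nat \<Rightarrow> bool"
    show "dual F (\<lambda>v. V v \<and> W v) = (dual F V \<and> dual F W)"
      using F[unfolded preserves_def, rule_format, of "\<lambda>v. \<not> V v" "\<lambda>v. \<not> W v"]
      by (simp add: dual_def)
  qed
next
  assume F: "preserves (\<and>) (dual F)"
  show "preserves (\<or>) F" unfolding preserves_def
  proof (intro allI)
    fix V W :: "nat \<Rightarrow> bool"
    show "F (\<lambda>v. V v \<or> W v) = (F V \<or> F W)"
      using F[unfolded preserves_def, rule_format, of "\<lambda>v. \<not> V v" "\<lambda>v. \<not> W v"]
      by (auto simp: dual_def)
  qed
qed

lemma depends_only_on_dual: "depends_only_on X F \<Longrightarrow> depends_only_on X (dual F)"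
  by (simp add: depends_only_on_def dual_def)

definition flip_example :: "example \<Rightarrow> example" where
  "flip_example e = ((\<lambda>v. \<not> fst e v), \<not> snd e)"

lemma characterizes_within_dual:
  assumes "characterizes_within (preserves (\<and>)) E (dual F)"
  shows "characterizes_within (preserves (\<or>)) (flip_example ` E) F"
  unfolding characterizes_within_def
proof (intro conjI allI impI)
  show "\<forall>e\<in>flip_example ` E. F (fst e) = snd e"
    using assms unfolding characterizes_within_def flip_example_def dual_def by auto
  fix G assume "preserves (\<or>) G \<and> (\<forall>e\<in>flip_example ` E. G (fst e) = snd e)"
  then have "preserves (\<and>) (dual G)" "\<forall>e\<in>E. dual G (fst e) = snd e"
    by (auto simp: preserves_disj_iff_dual flip_example_def dual_def)
  then have "dual G = dual F"
    by (intro conjunct2[OF assms[unfolded characterizes_within_def], rule_format] conjI)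
  then have "dual (dual G) = dual (dual F)" by (rule arg_cong)
  then show "G = F" by simp
qed

lemma preserves_disj_normal_form:
  assumes "preserves (\<or>) F" "depends_only_on X F" "finite X"
  shows "F = (\<lambda>_. True) \<or> (\<exists>S\<subseteq>X. F = (\<lambda>V. \<exists>x\<in>S. V x))"
proof -
  have "dual F = (\<lambda>_. False) \<or> (\<exists>S\<subseteq>X. dual F = (\<lambda>V. \<forall>x\<in>S. V x))"
    using assms
    by (intro preserves_conj_normal_form) (simp_all add: preserves_disj_iff_dual depends_only_on_dual)
  then show ?thesis
  proof (elim disjE exE conjE)
    assume "dual F = (\<lambda>_. False)"
    then have "dual (dual F) = dual (\<lambda>_. False)" by (rule arg_cong)
    then show ?thesis by (simp add: dual_def)
  next
    fix S assume "S \<subseteq> X" and dF: "dual F = (\<lambda>V. \<forall>x\<in>S. V x)"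
    from dF have "dual (dual F) = dual (\<lambda>V. \<forall>x\<in>S. V x)" by (rule arg_cong)
    with \<open>S \<subseteq> X\<close> show ?thesis by (auto simp: dual_def)
  qed
qed

lemma preserves_disj_characterization:
  assumes "preserves (\<or>) F" "depends_only_on X F" "finite X"
  obtains E where "finite E" "card E \<le> card X + 1" "characterizes_within (preserves (\<or>)) E F"
proof -
  have "preserves (\<and>) (dual F)" "depends_only_on X (dual F)"
    using assms(1,2) by (simp_all add: preserves_disj_iff_dual depends_only_on_dual)
  then obtain E where "finite E" "card E \<le> card X + 1"
    "characterizes_within (preserves (\<and>)) E (dual F)"
    using preserves_conj_characterization assms(3) by blast
  moreover have "card (flip_example ` E) \<le> card E" using \<open>finite E\<close> by (rule card_image_le)
  ultimately show thesis by (intro that[of "flip_example ` E"] characterizes_within_dual) auto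
qed

lemma essentially_unaryE:
  assumes "essentially_unary F"
  obtains c where "\<And>V. F V = c" | x b where "\<And>V. F V = (V x = b)"
  using assms unfolding essentially_unary_def by metis

lemma characterizes_within_unary_const:
  "characterizes_within essentially_unary {((\<lambda>_. False), c), ((\<lambda>_. True), c)} (\<lambda>_. c)"
proof -
  have "G = (\<lambda>_. c)" if "essentially_unary G" "G (\<lambda>_. False) = c" "G (\<lambda>_. True) = c" for G
  proof
    fix V
    from that(1) show "G V = c"
    proof (cases rule: essentially_unaryE)
      case (2 y b')
      from this[of "\<lambda>_. False"] this[of "\<lambda>_. True"] that(2,3) show ?thesis by simp
    qed (use that(2) in simp)
  qed
  then show ?thesis unfolding characterizes_within_def
    by (intro conjI allI impI) (simp, erule conjE, simp)
qed

lemma characterizes_within_unary_literal: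
  "characterizes_within essentially_unary {((\<lambda>v. v = x), (True = b)), ((\<lambda>_. False), (False = b))}
     (\<lambda>V. V x = b)"
proof -
  have "G = (\<lambda>V. V x = b)"
    if "essentially_unary G" "G (\<lambda>v. v = x) = b" "G (\<lambda>_. False) = (\<not> b)" for G
  proof
    fix V
    from that(1) show "G V = (V x = b)"
    proof (cases rule: essentially_unaryE)
      case (1 c)
      from this[of "\<lambda>v. v = x"] this[of "\<lambda>_. False"] that(2,3) show ?thesis by simp
    next
      case (2 y b')
      from this[of "\<lambda>v. v = x"] this[of "\<lambda>_. False"] that(2,3) have "y = x" "b' = b" by auto
      with 2 show ?thesis by simp
    qed
  qed
  then show ?thesis unfolding characterizes_within_def
    by (intro conjI allI impI) (simp, erule conjE, simp)
qed

lemma essentially_unary_characterization: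
  assumes "essentially_unary F"
  obtains E where "finite E" "card E \<le> 2" "characterizes_within essentially_unary E F"
  using assms
proof (cases rule: essentially_unaryE)
  case (1 c)
  then have "F = (\<lambda>_. c)" by (simp add: fun_eq_iff)
  with characterizes_within_unary_const[of c] show thesis
    by (intro that[of "{((\<lambda>_. False), c), ((\<lambda>_. True), c)}"]) (simp_all add: card_insert_le_m1)
next
  case (2 x b)
  then have "F = (\<lambda>V. V x = b)" by (simp add: fun_eq_iff)
  with characterizes_within_unary_literal[of x b] show thesis
    by (intro that[of "{((\<lambda>v. v = x), (True = b)), ((\<lambda>_. False), (False = b))}"])
      (simp_all add: card_insert_le_m1)
qed

lemma uniquely_characterizes_if_characterizes_within:
  assumes "\<And>\<psi>. in_PL Ops \<psi> \<Longrightarrow> P (\<lambda>V. eval V \<psi>)"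
    and "characterizes_within P E (\<lambda>V. eval V \<phi>)"
  shows "uniquely_characterizes Ops E \<phi>"
  unfolding uniquely_characterizes_def fits_def
proof (intro conjI allI impI)
  show "\<forall>e\<in>E. eval (fst e) \<phi> = snd e"
    using assms(2) unfolding characterizes_within_def by simp
  fix \<psi> assume "in_PL Ops \<psi> \<and> (\<forall>e\<in>E. eval (fst e) \<psi> = snd e)"
  with assms(1) have "(\<lambda>V. eval V \<psi>) = (\<lambda>V. eval V \<phi>)"
    by (intro conjunct2[OF assms(2)[unfolded characterizes_within_def], rule_format]) auto
  then show "equiv_form \<psi> \<phi>" unfolding equiv_form_def by (simp add: fun_eq_iff)
qed

section \<open>Semantic clones\<close>

definition bfun_sem :: "bfun \<Rightarrow> (nat \<Rightarrow> bool) \<Rightarrow> bool" where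
  "bfun_sem f = (\<lambda>V. snd f (map V [0..<fst f]))"

lemma bfun_sem_eq:
  assumes "length xs = fst f" "\<And>i. i < fst f \<Longrightarrow> V i = xs ! i"
  shows "bfun_sem f V = snd f xs"
proof -
  have "map V [0..<fst f] = xs" using assms by (simp add: list_eq_iff_nth_eq)
  then show ?thesis by (simp add: bfun_sem_def)
qed

lemma depends_only_on_bfun_sem: "depends_only_on {..<fst f} (bfun_sem f)"
  unfolding depends_only_on_def
proof (intro allI impI)
  fix V W :: "nat \<Rightarrow> bool"
  assume "\<forall>x\<in>{..<fst f}. V x = W x"
  then have "map V [0..<fst f] = map W [0..<fst f]" by simp
  then show "bfun_sem f V = bfun_sem f W" unfolding bfun_sem_def by (rule arg_cong)
qed

lemma bfun_sem_bproj: "i < n \<Longrightarrow> bfun_sem (bproj n i) = (\<lambda>V. V i)"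
  by (simp add: bfun_sem_def bproj_def)

lemma bfun_sem_bcomp:
  assumes "\<forall>g\<in>set gs. fst g = n"
  shows "bfun_sem (bcomp n h gs) = (\<lambda>V. snd h (map (\<lambda>g. bfun_sem g V) gs))"
proof
  fix V
  have "bfun_sem (bcomp n h gs) V = snd h (map (\<lambda>g. snd g (map V [0..<n])) gs)"
    by (simp add: bfun_sem_def bcomp_def)
  also have "map (\<lambda>g. snd g (map V [0..<n])) gs = map (\<lambda>g. bfun_sem g V) gs"
    using assms by (auto simp: bfun_sem_def)
  finally show "bfun_sem (bcomp n h gs) V = snd h (map (\<lambda>g. bfun_sem g V) gs)" .
qed

lemma bfun_sem_bcomp_nth:
  assumes "length gs = fst h" "\<forall>g\<in>set gs. fst g = n"
  shows "bfun_sem (bcomp n h gs) = (\<lambda>V. bfun_sem h (\<lambda>i. bfun_sem (gs ! i) V))"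
  using bfun_sem_eq[of "map (\<lambda>g. bfun_sem g _) gs" h] assms by (simp add: bfun_sem_bcomp)

lemma eval_App_bfun_sem:
  "length args = fst f \<Longrightarrow> eval V (App f args) = bfun_sem f (\<lambda>i. eval V (args ! i))"
  using bfun_sem_eq[of "map (eval V) args" f] by simp

lemma definable_bfun_sem: "f \<in> Ops \<Longrightarrow> definable Ops (bfun_sem f)"
  unfolding definable_def bfun_sem_def
  by (intro exI[of _ "App f (map Var [0..<fst f])"]) (simp add: o_def)

lemma bfun_eq_if_sem_eq:
  assumes "bfun_wf f" "bfun_wf h" "fst f = fst h" "bfun_sem f = bfun_sem h"
  shows "f = h"
proof (rule prod_eqI)
  show "snd f = snd h"
  proof
    fix xs :: "bool list"
    show "snd f xs = snd h xs"
      using assms bfun_sem_eq[of xs f "\<lambda>i. xs ! i"] bfun_sem_eq[of xs h "\<lambda>i. xs ! i"]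
      unfolding bfun_wf_def
      by (cases "length xs = fst f") auto
  qed
qed (fact assms(3))

lemma clone_bfun_wf:
  assumes "\<And>g. g \<in> Ops \<Longrightarrow> bfun_wf g" "f \<in> clone Ops"
  shows "bfun_wf f"
  using assms(2)
proof (induction rule: clone.induct)
  case (base g)
  then show ?case by (rule assms(1))
qed (auto simp: bfun_wf_def bproj_def bcomp_def)

lemma in_clone_if_sem_eq:
  assumes "h \<in> clone Ops" "\<And>g. g \<in> Ops \<Longrightarrow> bfun_wf g" "bfun_wf f"
    and "fst h = fst f" "bfun_sem h = bfun_sem f"
  shows "f \<in> clone Ops"
  using bfun_eq_if_sem_eq[OF clone_bfun_wf[OF assms(2,1)] assms(3-5)] assms(1) by simp

definition subst_closed :: "(((nat \<Rightarrow> bool) \<Rightarrow> bool) \<Rightarrow> bool) \<Rightarrow> bool" where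
  "subst_closed P \<longleftrightarrow> (\<forall>x. P (\<lambda>V. V x)) \<and>
     (\<forall>F X G. P F \<longrightarrow> depends_only_on X F \<longrightarrow> (\<forall>i\<in>X. P (G i))
        \<longrightarrow> P (\<lambda>V. F (\<lambda>i. G i V)))"

lemma subst_closedD:
  assumes "subst_closed P"
  shows "P (\<lambda>V. V x)"
    and "P F \<Longrightarrow> depends_only_on X F \<Longrightarrow> (\<And>i. i \<in> X \<Longrightarrow> P (G i))
           \<Longrightarrow> P (\<lambda>V. F (\<lambda>i. G i V))"
proof -
  show "P (\<lambda>V. V x)" using assms unfolding subst_closed_def by simp
  show "P F \<Longrightarrow> depends_only_on X F \<Longrightarrow> (\<And>i. i \<in> X \<Longrightarrow> P (G i))
           \<Longrightarrow> P (\<lambda>V. F (\<lambda>i. G i V))"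
    using assms unfolding subst_closed_def by simp
qed

lemma clone_subst_closed:
  assumes "subst_closed P" "\<And>f. f \<in> Ops \<Longrightarrow> P (bfun_sem f)" "g \<in> clone Ops"
  shows "P (bfun_sem g)"
  using assms(3)
proof (induction rule: clone.induct)
  case (base g)
  then show ?case by (rule assms(2))
next
  case (proj n i)
  then show ?case using subst_closedD(1)[OF assms(1)] by (simp add: bfun_sem_bproj)
next
  case (comp f gs n)
  have "P (\<lambda>V. bfun_sem f (\<lambda>i. bfun_sem (gs ! i) V))"
    by (rule subst_closedD(2)[OF assms(1) _ depends_only_on_bfun_sem]) (use comp in auto)
  with comp show ?case by (simp add: bfun_sem_bcomp_nth)
qed

lemma eval_subst_closed:
  assumes "subst_closed P" "\<And>f. f \<in> Ops \<Longrightarrow> P (bfun_sem f)" "in_PL Ops \<phi>"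
  shows "P (\<lambda>V. eval V \<phi>)"
  using assms(3)
proof (induction \<phi>)
  case (Var x)
  then show ?case using subst_closedD(1)[OF assms(1)] by simp
next
  case (App f args)
  then have "length args = fst f" by simp
  have "P (\<lambda>V. bfun_sem f (\<lambda>i. eval V (args ! i)))"
    by (rule subst_closedD(2)[OF assms(1) _ depends_only_on_bfun_sem])
      (use App \<open>length args = fst f\<close> in \<open>auto intro: assms(2)\<close>)
  moreover have "(\<lambda>V. eval V (App f args)) = (\<lambda>V. bfun_sem f (\<lambda>i. eval V (args ! i)))"
    by (rule ext) (rule eval_App_bfun_sem[OF \<open>length args = fst f\<close>])
  ultimately show ?case by simp
qed

lemma subst_closed_preserves: "subst_closed (preserves op)"
  unfolding subst_closed_def
proof (intro conjI allI impI)
  fix F :: "(nat \<Rightarrow> bool) \<Rightarrow> bool" and X G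
  assume F: "preserves op F" "depends_only_on X F" and G: "\<forall>i\<in>X. preserves op (G i)"
  show "preserves op (\<lambda>V. F (\<lambda>i. G i V))" unfolding preserves_def
  proof (intro allI)
    fix V W :: "nat \<Rightarrow> bool"
    have "F (\<lambda>i. G i (\<lambda>v. op (V v) (W v))) = F (\<lambda>i. op (G i V) (G i W))"
      using F(2) G unfolding depends_only_on_def preserves_def by simp
    also have "\<dots> = op (F (\<lambda>i. G i V)) (F (\<lambda>i. G i W))"
      using F(1) unfolding preserves_def by simp
    finally show "F (\<lambda>i. G i (\<lambda>v. op (V v) (W v))) = op (F (\<lambda>i. G i V)) (F (\<lambda>i. G i W))" .
  qed
qed (simp add: preserves_def)

lemma subst_closed_essentially_unary: "subst_closed essentially_unary"
  unfolding subst_closed_def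
proof (intro conjI allI impI)
  fix F :: "(nat \<Rightarrow> bool) \<Rightarrow> bool" and X G
  assume F: "essentially_unary F" "depends_only_on X F" and G: "\<forall>i\<in>X. essentially_unary (G i)"
  from F(1) show "essentially_unary (\<lambda>V. F (\<lambda>i. G i V))"
  proof (cases rule: essentially_unaryE)
    case (1 c)
    then show ?thesis by (simp add: essentially_unary_def)
  next
    case (2 x b)
    show ?thesis
    proof (cases "x \<in> X")
      case True
      with G have "essentially_unary (G x)" by blast
      then show ?thesis
      proof (cases rule: essentially_unaryE)
        case (1 c)
        then show ?thesis using 2 by (simp add: essentially_unary_def)
      next
        case (2 y b')
        then show ?thesis using \<open>\<And>V. F V = (V x = b)\<close> unfolding essentially_unary_def
          by (intro disjI2 exI[of _ y] exI[of _ "b' = b"]) auto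
      qed
    next
      case False
      have "F (\<lambda>_. b) = F ((\<lambda>_. b)(x := \<not> b))"
        by (rule F(2)[unfolded depends_only_on_def, rule_format]) (use False in auto)
      with 2 show ?thesis by simp
    qed
  qed
qed (auto simp: essentially_unary_def)

lemma depends_only_on_vars: "depends_only_on (vars \<phi>) (\<lambda>V. eval V \<phi>)"
  unfolding depends_only_on_def using eval_cong by blast

section \<open>The clones generated by conjunction, disjunction and negation\<close>

lemma snd_basic [simp]:
  "snd band [a, b] = (a \<and> b)" "snd bor [a, b] = (a \<or> b)" "snd bneg [a] = (\<not> a)"
  "snd btop [a] = True" "snd bbot [a] = False"
  by (simp_all add: band_def bor_def bneg_def btop_def bbot_def)

lemma bfun_sem_basic [simp]:
  "bfun_sem band = (\<lambda>V. V 0 \<and> V 1)" "bfun_sem bor = (\<lambda>V. V 0 \<or> V 1)"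
  "bfun_sem bneg = (\<lambda>V. \<not> V 0)" "bfun_sem btop = (\<lambda>_. True)" "bfun_sem bbot = (\<lambda>_. False)"
  by (simp_all add: bfun_sem_def band_def bor_def bneg_def btop_def bbot_def upt_rec)

lemma bfun_wf_basic:
  "bfun_wf band" "bfun_wf bor" "bfun_wf bneg" "bfun_wf btop" "bfun_wf bbot"
  by (simp_all add: bfun_wf_def band_def bor_def bneg_def btop_def bbot_def)

lemma fst_basic [simp]:
  "fst band = 2" "fst bor = 2" "fst bneg = 1" "fst btop = 1" "fst bbot = 1"
  by (simp_all add: band_def bor_def bneg_def btop_def bbot_def)

lemma fst_bproj [simp]: "fst (bproj n i) = n"
  by (simp add: bproj_def)

lemma fst_bcomp [simp]: "fst (bcomp n f gs) = n"
  by (simp add: bcomp_def)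

lemma clone_bcomp1:
  "f \<in> clone Ops \<Longrightarrow> fst f = 1 \<Longrightarrow> 1 \<le> n \<Longrightarrow> g \<in> clone Ops \<Longrightarrow> fst g = n \<Longrightarrow>
   bcomp n f [g] \<in> clone Ops"
  by (rule clone.comp) auto

lemma clone_bcomp2:
  "f \<in> clone Ops \<Longrightarrow> fst f = 2 \<Longrightarrow> 1 \<le> n \<Longrightarrow> g \<in> clone Ops \<Longrightarrow> fst g = n \<Longrightarrow>
   h \<in> clone Ops \<Longrightarrow> fst h = n \<Longrightarrow> bcomp n f [g, h] \<in> clone Ops"
  by (rule clone.comp) auto

lemma clone_const:
  "c \<in> Ops \<Longrightarrow> fst c = 1 \<Longrightarrow> 1 \<le> n \<Longrightarrow> bcomp n c [bproj n 0] \<in> clone Ops"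
  by (intro clone_bcomp1 clone.base clone.proj) auto

lemma bfun_sem_const: "1 \<le> n \<Longrightarrow> bfun_sem (bcomp n c [bproj n 0]) = (\<lambda>V. snd c [V 0])"
  by (simp add: bfun_sem_bcomp bfun_sem_bproj)

fun bconj_list :: "nat \<Rightarrow> nat list \<Rightarrow> bfun" where
  "bconj_list n [] = bcomp n btop [bproj n 0]"
| "bconj_list n (i # is) = bcomp n band [bproj n i, bconj_list n is]"

fun bdisj_list :: "nat \<Rightarrow> nat list \<Rightarrow> bfun" where
  "bdisj_list n [] = bcomp n bbot [bproj n 0]"
| "bdisj_list n (i # is) = bcomp n bor [bproj n i, bdisj_list n is]"

lemma bconj_list_in_clone:
  assumes "1 \<le> n" "set is \<subseteq> {..<n}"
  shows "bconj_list n is \<in> clone {band, btop, bbot} \<and> fst (bconj_list n is) = n \<and>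
    bfun_sem (bconj_list n is) = (\<lambda>V. \<forall>i\<in>set is. V i)"
  using assms(2)
proof (induction "is")
  case Nil
  then show ?case using assms(1) by (simp add: clone_const bfun_sem_const)
next
  case (Cons i "is")
  then have i: "i < n" and IH: "bconj_list n is \<in> clone {band, btop, bbot}" "fst (bconj_list n is) = n"
    "bfun_sem (bconj_list n is) = (\<lambda>V. \<forall>j\<in>set is. V j)"
    by auto
  have "bconj_list n (i # is) \<in> clone {band, btop, bbot}"
    using assms(1) i IH(1,2) by (simp add: clone_bcomp2 clone.base clone.proj)
  moreover have "bfun_sem (bconj_list n (i # is)) = (\<lambda>V. \<forall>j\<in>set (i # is). V j)"
    using i IH(2,3) by (simp add: bfun_sem_bcomp bfun_sem_bproj)
  ultimately show ?case by simp
qed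

lemma bdisj_list_in_clone:
  assumes "1 \<le> n" "set is \<subseteq> {..<n}"
  shows "bdisj_list n is \<in> clone {bor, btop, bbot} \<and> fst (bdisj_list n is) = n \<and>
    bfun_sem (bdisj_list n is) = (\<lambda>V. \<exists>i\<in>set is. V i)"
  using assms(2)
proof (induction "is")
  case Nil
  then show ?case using assms(1) by (simp add: clone_const bfun_sem_const)
next
  case (Cons i "is")
  then have i: "i < n" and IH: "bdisj_list n is \<in> clone {bor, btop, bbot}" "fst (bdisj_list n is) = n"
    "bfun_sem (bdisj_list n is) = (\<lambda>V. \<exists>j\<in>set is. V j)"
    by auto
  have "bdisj_list n (i # is) \<in> clone {bor, btop, bbot}"
    using assms(1) i IH(1,2) by (simp add: clone_bcomp2 clone.base clone.proj)
  moreover have "bfun_sem (bdisj_list n (i # is)) = (\<lambda>V. \<exists>j\<in>set (i # is). V j)"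
    using i IH(2,3) by (simp add: bfun_sem_bcomp bfun_sem_bproj)
  ultimately show ?case by simp
qed

lemma clone_conj_complete:
  assumes f: "bfun_wf f" "preserves (\<and>) (bfun_sem f)"
  shows "f \<in> clone {band, btop, bbot}"
proof -
  define n where "n = fst f"
  have n: "1 \<le> n" using f(1) unfolding bfun_wf_def n_def by simp
  have wf: "\<And>g. g \<in> {band, btop, bbot} \<Longrightarrow> bfun_wf g" using bfun_wf_basic by auto
  from preserves_conj_normal_form[OF f(2) depends_only_on_bfun_sem finite_lessThan]
  show ?thesis
  proof (elim disjE exE conjE)
    assume "bfun_sem f = (\<lambda>_. False)"
    then show ?thesis
      using n
      by (intro in_clone_if_sem_eq[OF clone_const[of bbot] wf f(1)]) (auto simp: n_def bfun_sem_const)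
  next
    fix S assume S: "S \<subseteq> {..<fst f}" "bfun_sem f = (\<lambda>V. \<forall>x\<in>S. V x)"
    then have "finite S" by (simp add: finite_subset)
    with S n bconj_list_in_clone[of n "sorted_list_of_set S"] show ?thesis
      by (intro in_clone_if_sem_eq[where h = "bconj_list n (sorted_list_of_set S)", OF _ wf f(1)])
        (auto simp: n_def)
  qed
qed

lemma clone_disj_complete:
  assumes f: "bfun_wf f" "preserves (\<or>) (bfun_sem f)"
  shows "f \<in> clone {bor, btop, bbot}"
proof -
  define n where "n = fst f"
  have n: "1 \<le> n" using f(1) unfolding bfun_wf_def n_def by simp
  have wf: "\<And>g. g \<in> {bor, btop, bbot} \<Longrightarrow> bfun_wf g" using bfun_wf_basic by auto
  from preserves_disj_normal_form[OF f(2) depends_only_on_bfun_sem finite_lessThan]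
  show ?thesis
  proof (elim disjE exE conjE)
    assume "bfun_sem f = (\<lambda>_. True)"
    then show ?thesis
      using n
      by (intro in_clone_if_sem_eq[OF clone_const[of btop] wf f(1)]) (auto simp: n_def bfun_sem_const)
  next
    fix S assume S: "S \<subseteq> {..<fst f}" "bfun_sem f = (\<lambda>V. \<exists>x\<in>S. V x)"
    then have "finite S" by (simp add: finite_subset)
    with S n bdisj_list_in_clone[of n "sorted_list_of_set S"] show ?thesis
      by (intro in_clone_if_sem_eq[where h = "bdisj_list n (sorted_list_of_set S)", OF _ wf f(1)])
        (auto simp: n_def)
  qed
qed

lemma clone_neg_bot_const:
  assumes "1 \<le> n"
  obtains h where "h \<in> clone {bneg, bbot}" "fst h = n" "bfun_sem h = (\<lambda>_. c)"
proof -
  have bot: "bcomp n bbot [bproj n 0] \<in> clone {bneg, bbot}" using assms by (simp add: clone_const)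
  show thesis
  proof (cases c)
    case True
    have "bcomp n bneg [bcomp n bbot [bproj n 0]] \<in> clone {bneg, bbot}"
      using assms bot by (simp add: clone_bcomp1 clone.base)
    then show thesis
      by (rule that) (use True assms in \<open>simp_all add: bfun_sem_bcomp bfun_sem_const\<close>)
  next
    case False
    from bot show thesis by (rule that) (use False assms in \<open>simp_all add: bfun_sem_const\<close>)
  qed
qed

lemma clone_neg_bot_literal:
  assumes "x < n"
  obtains h where "h \<in> clone {bneg, bbot}" "fst h = n" "bfun_sem h = (\<lambda>V. V x = b)"
proof -
  have proj: "bproj n x \<in> clone {bneg, bbot}" using assms by (simp add: clone.proj)
  show thesis
  proof (cases b)
    case True
    from proj show thesis by (rule that) (use True assms in \<open>simp_all add: bfun_sem_bproj\<close>)
  next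
    case False
    have "bcomp n bneg [bproj n x] \<in> clone {bneg, bbot}"
      using assms proj by (simp add: clone_bcomp1 clone.base)
    then show thesis
      by (rule that) (use False assms in \<open>simp_all add: bfun_sem_bcomp bfun_sem_bproj\<close>)
  qed
qed

lemma essentially_unary_bfun_semE:
  assumes "essentially_unary (bfun_sem f)"
  obtains c where "bfun_sem f = (\<lambda>_. c)" | x b where "x < fst f" "bfun_sem f = (\<lambda>V. V x = b)"
  using assms
proof (cases rule: essentially_unaryE)
  case (1 c)
  then show thesis by (intro that(1)) (simp add: fun_eq_iff)
next
  case (2 x b)
  have "x < fst f"
  proof (rule ccontr)
    assume "\<not> x < fst f"
    then have "bfun_sem f (\<lambda>_. b) = bfun_sem f ((\<lambda>_. b)(x := \<not> b))"
      by (intro depends_only_on_bfun_sem[unfolded depends_only_on_def, rule_format]) auto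
    with 2 show False by simp
  qed
  then show thesis by (rule that(2)[of x b]) (use 2 in \<open>simp add: fun_eq_iff\<close>)
qed

lemma clone_unary_complete:
  assumes f: "bfun_wf f" "essentially_unary (bfun_sem f)"
  shows "f \<in> clone {bneg, bbot}"
proof -
  have n: "1 \<le> fst f" using f(1) unfolding bfun_wf_def by simp
  have wf: "\<And>g. g \<in> {bneg, bbot} \<Longrightarrow> bfun_wf g" using bfun_wf_basic by auto
  from f(2) obtain h where h: "h \<in> clone {bneg, bbot}" "fst h = fst f" "bfun_sem h = bfun_sem f"
  proof (cases rule: essentially_unary_bfun_semE)
    case (1 c)
    obtain h where h: "h \<in> clone {bneg, bbot}" "fst h = fst f" "bfun_sem h = (\<lambda>_. c)"
      using clone_neg_bot_const[OF n] .
    show thesis by (rule that[OF h(1,2)]) (use h(3) 1 in simp)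
  next
    case (2 x b)
    obtain h where h: "h \<in> clone {bneg, bbot}" "fst h = fst f" "bfun_sem h = (\<lambda>V. V x = b)"
      using clone_neg_bot_literal[OF 2(1)] .
    show thesis by (rule that[OF h(1,2)]) (use h(3) 2 in simp)
  qed
  show ?thesis by (rule in_clone_if_sem_eq[OF h(1) wf f(1) h(2,3)])
qed

lemma clone_le_iff_subset: "Ops \<preceq>\<^sub>c B \<longleftrightarrow> Ops \<subseteq> clone B"
proof
  assume "Ops \<subseteq> clone B"
  have "g \<in> clone B" if "g \<in> clone Ops" for g
    using that by (induction rule: clone.induct) (use \<open>Ops \<subseteq> clone B\<close> in \<open>auto intro: clone.intros\<close>)
  then show "Ops \<preceq>\<^sub>c B" unfolding clone_le_def by blast
qed (auto simp: clone_le_def intro: clone.base)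

lemma definable_outside_if_not_below:
  assumes "\<forall>g\<in>Ops. bfun_wf g" "\<not> Ops \<preceq>\<^sub>c B"
    and complete: "\<And>f. bfun_wf f \<Longrightarrow> P (bfun_sem f) \<Longrightarrow> f \<in> clone B"
  obtains F where "definable Ops F" "\<not> P F"
proof -
  from assms(2) obtain f where "f \<in> Ops" "f \<notin> clone B" unfolding clone_le_iff_subset by blast
  with assms(1) complete have "\<not> P (bfun_sem f)" by blast
  with definable_bfun_sem[OF \<open>f \<in> Ops\<close>] show thesis by (rule that)
qed

lemma eval_subst_closed_if_below:
  assumes "subst_closed P" "\<And>f. f \<in> B \<Longrightarrow> P (bfun_sem f)" "Ops \<preceq>\<^sub>c B" "in_PL Ops \<phi>"
  shows "P (\<lambda>V. eval V \<phi>)"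
proof (rule eval_subst_closed[OF assms(1) _ assms(4)])
  fix f assume "f \<in> Ops"
  with assms(3) have "f \<in> clone B" unfolding clone_le_iff_subset by blast
  with assms(1,2) show "P (bfun_sem f)" by (rule clone_subst_closed)
qed

lemma characterizing_set_if_below_conj:
  assumes "Ops \<preceq>\<^sub>c {band, btop, bbot}" "in_PL Ops \<phi>"
  shows "\<exists>E. finite E \<and> card E \<le> dag_size \<phi> + 1 \<and> uniquely_characterizes Ops E \<phi>"
proof -
  have P: "preserves (\<and>) (\<lambda>V. eval V \<psi>)" if "in_PL Ops \<psi>" for \<psi>
    by (rule eval_subst_closed_if_below[OF subst_closed_preserves _ assms(1) that])
      (auto simp: preserves_def)
  obtain E where E: "finite E" "card E \<le> card (vars \<phi>) + 1"
    "characterizes_within (preserves (\<and>)) E (\<lambda>V. eval V \<phi>)"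
    using preserves_conj_characterization[OF P[OF assms(2)] depends_only_on_vars finite_vars] .
  have "uniquely_characterizes Ops E \<phi>"
    by (rule uniquely_characterizes_if_characterizes_within[OF P E(3)])
  moreover have "card E \<le> dag_size \<phi> + 1" using E(2) card_vars_le_dag_size[of \<phi>] by linarith
  ultimately show ?thesis using E(1) by blast
qed

lemma characterizing_set_if_below_disj:
  assumes "Ops \<preceq>\<^sub>c {bor, btop, bbot}" "in_PL Ops \<phi>"
  shows "\<exists>E. finite E \<and> card E \<le> dag_size \<phi> + 1 \<and> uniquely_characterizes Ops E \<phi>"
proof -
  have P: "preserves (\<or>) (\<lambda>V. eval V \<psi>)" if "in_PL Ops \<psi>" for \<psi>
    by (rule eval_subst_closed_if_below[OF subst_closed_preserves _ assms(1) that])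
      (auto simp: preserves_def)
  obtain E where E: "finite E" "card E \<le> card (vars \<phi>) + 1"
    "characterizes_within (preserves (\<or>)) E (\<lambda>V. eval V \<phi>)"
    using preserves_disj_characterization[OF P[OF assms(2)] depends_only_on_vars finite_vars] .
  have "uniquely_characterizes Ops E \<phi>"
    by (rule uniquely_characterizes_if_characterizes_within[OF P E(3)])
  moreover have "card E \<le> dag_size \<phi> + 1" using E(2) card_vars_le_dag_size[of \<phi>] by linarith
  ultimately show ?thesis using E(1) by blast
qed

lemma characterizing_set_if_below_neg:
  assumes "Ops \<preceq>\<^sub>c {bneg, bbot}" "in_PL Ops \<phi>"
  shows "\<exists>E. finite E \<and> card E \<le> dag_size \<phi> + 1 \<and> uniquely_characterizes Ops E \<phi>"
proof -
  have "essentially_unary (\<lambda>V. \<not> V 0)" "essentially_unary (\<lambda>_. False)"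
    unfolding essentially_unary_def by blast+
  then have P: "essentially_unary (\<lambda>V. eval V \<psi>)" if "in_PL Ops \<psi>" for \<psi>
    by (intro eval_subst_closed_if_below[OF subst_closed_essentially_unary _ assms(1) that]) auto
  obtain E where E: "finite E" "card E \<le> 2" "characterizes_within essentially_unary E (\<lambda>V. eval V \<phi>)"
    using essentially_unary_characterization[OF P[OF assms(2)]] .
  have "uniquely_characterizes Ops E \<phi>"
    by (rule uniquely_characterizes_if_characterizes_within[OF P E(3)])
  moreover have "card E \<le> dag_size \<phi> + 1" using E(2) dag_size_pos[of \<phi>] by linarith
  ultimately show ?thesis using E(1) by blast
qed

section \<open>Every clone above the three small ones defines a hard ternary function\<close>

definition maj3 :: "bool \<Rightarrow> bool \<Rightarrow> bool \<Rightarrow> bool" where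
  "maj3 x y z \<longleftrightarrow> (x \<and> y) \<or> (y \<and> z) \<or> (x \<and> z)"

definition xor3 :: "bool \<Rightarrow> bool \<Rightarrow> bool \<Rightarrow> bool" where
  "xor3 x y z \<longleftrightarrow> x \<noteq> (y \<noteq> z)"

definition and_or3 :: "bool \<Rightarrow> bool \<Rightarrow> bool \<Rightarrow> bool" where
  "and_or3 x y z \<longleftrightarrow> x \<and> (y \<or> z)"

definition or_and3 :: "bool \<Rightarrow> bool \<Rightarrow> bool \<Rightarrow> bool" where
  "or_and3 x y z \<longleftrightarrow> x \<or> (y \<and> z)"

definition defines_hard_ternary :: "bfun set \<Rightarrow> bool" where
  "defines_hard_ternary Ops \<longleftrightarrow>
     definable3 Ops maj3 \<or> definable3 Ops xor3 \<or> definable3 Ops and_or3 \<or> definable3 Ops or_and3"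

lemma definable_depends_only_on_finite:
  assumes "definable Ops F"
  obtains X where "finite X" "depends_only_on X F"
proof -
  from assms obtain \<psi> where "\<forall>V. eval V \<psi> = F V" unfolding definable_def by blast
  with depends_only_on_vars[of \<psi>] have "depends_only_on (vars \<psi>) F" by simp
  with finite_vars show thesis by (rule that)
qed

lemma depends_only_on_restrict:
  "depends_only_on X F \<Longrightarrow> F (\<lambda>v. if v \<in> X then W v else V v) = F W"
  unfolding depends_only_on_def by simp

lemma exists_sensitive_flip_finite:
  assumes "finite D" "\<forall>v. v \<notin> D \<longrightarrow> V v = W v" "P V \<noteq> P W"
  shows "\<exists>U d. P U \<noteq> P (U(d := \<not> U d))"
  using assms
proof (induction D arbitrary: V rule: finite_induct)
  case empty
  then have "V = W" by auto
  with empty show ?case by simp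
next
  case (insert d D V)
  define V' where "V' = V(d := W d)"
  show ?case
  proof (cases "P V = P V'")
    case False
    have "V d \<noteq> W d"
    proof
      assume "V d = W d"
      then have "V' = V" unfolding V'_def by (simp add: fun_upd_idem)
      with False show False by simp
    qed
    then have "V' = V(d := \<not> V d)" unfolding V'_def by auto
    with False have "P V \<noteq> P (V(d := \<not> V d))" by simp
    then show ?thesis by (intro exI)
  next
    case True
    have "\<forall>v. v \<notin> D \<longrightarrow> V' v = W v" using insert.prems(1) unfolding V'_def by auto
    moreover have "P V' \<noteq> P W" using True insert.prems(2) by simp
    ultimately show ?thesis by (rule insert.IH)
  qed
qed

lemma exists_sensitive_flip:
  assumes "depends_only_on X F" "finite X" "F V \<noteq> F W"
  shows "\<exists>U d. F U \<noteq> F (U(d := \<not> U d))"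
proof (rule exists_sensitive_flip_finite[where P = F and V = V, OF assms(2)])
  show "\<forall>v. v \<notin> X \<longrightarrow> V v = (\<lambda>v. if v \<in> X then W v else V v) v" by simp
  show "F V \<noteq> F (\<lambda>v. if v \<in> X then W v else V v)"
    using assms(3) depends_only_on_restrict[OF assms(1)] by simp
qed

lemma exists_monotone_flip_finite:
  assumes "finite D" "\<forall>v. V v \<longrightarrow> W v" "\<forall>v. v \<notin> D \<longrightarrow> V v = W v" "F V" "\<not> F W"
  shows "\<exists>U x. \<not> U x \<and> F U \<and> \<not> F (U(x := True))"
  using assms
proof (induction D arbitrary: V rule: finite_induct)
  case empty
  then have "V = W" by auto
  with empty show ?case by simp
next
  case (insert d D V)
  define V' where "V' = V(d := W d)"
  show ?case
  proof (cases "F V'")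
    case False
    have "V d \<noteq> W d"
    proof
      assume "V d = W d"
      then have "V' = V" unfolding V'_def by (simp add: fun_upd_idem)
      with False insert.prems(3) show False by simp
    qed
    with insert.prems(1) have "\<not> V d" "V' = V(d := True)" unfolding V'_def by auto
    with False insert.prems(3) have "\<not> V d \<and> F V \<and> \<not> F (V(d := True))" by simp
    then show ?thesis by (intro exI)
  next
    case True
    have "\<forall>v. V' v \<longrightarrow> W v" "\<forall>v. v \<notin> D \<longrightarrow> V' v = W v"
      using insert.prems(1,2) unfolding V'_def by auto
    with True insert.prems(4) show ?thesis by (intro insert.IH)
  qed
qed

lemma exists_monotone_flip:
  assumes "depends_only_on X F" "finite X" "\<not> mono F"
  shows "\<exists>U x. \<not> U x \<and> F U \<and> \<not> F (U(x := True))"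
proof -
  obtain V W where VW: "\<forall>v. V v \<longrightarrow> W v" "F V" "\<not> F W"
    using assms(3) unfolding mono_def le_fun_def le_bool_def by blast
  show ?thesis
  proof (rule exists_monotone_flip_finite[where F = F and V = V, OF assms(2) _ _ VW(2)])
    show "\<forall>v. V v \<longrightarrow> (\<lambda>v. if v \<in> X then W v else V v) v"
      "\<forall>v. v \<notin> X \<longrightarrow> V v = (\<lambda>v. if v \<in> X then W v else V v) v"
      using VW(1) by auto
    show "\<not> F (\<lambda>v. if v \<in> X then W v else V v)"
      using VW(3) depends_only_on_restrict[OF assms(1)] by simp
  qed
qed

definition binary_essential :: "(bool \<Rightarrow> bool \<Rightarrow> bool) \<Rightarrow> bool" where
  "binary_essential b \<longleftrightarrow> (\<exists>t. b False t \<noteq> b True t) \<and> (\<exists>s. b s False \<noteq> b s True)"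

lemma binary_essential_cases:
  assumes "binary_essential b"
  shows "(\<forall>s t. b s t = (s \<noteq> t)) \<or> (\<forall>s t. b s t = (s = t)) \<or>
         (\<exists>\<alpha> \<beta> \<gamma>. \<forall>s t. b s t = (\<gamma> \<noteq> ((\<alpha> \<noteq> s) \<and> (\<beta> \<noteq> t))))"
  using assms unfolding binary_essential_def
  by (cases "b False False"; cases "b False True"; cases "b True False"; cases "b True True")
     (simp_all add: all_bool_eq ex_bool_eq)

definition sensitive :: "((nat \<Rightarrow> bool) \<Rightarrow> bool) \<Rightarrow> nat \<Rightarrow> (nat \<Rightarrow> bool) \<Rightarrow> bool" where
  "sensitive F x V \<longleftrightarrow> F (V(x := False)) \<noteq> F (V(x := True))"

lemma depends_only_on_upd:
  "depends_only_on X F \<Longrightarrow> depends_only_on X (\<lambda>V. F (V(x := b)))"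
  unfolding depends_only_on_def by simp

lemma depends_only_on_sensitive:
  assumes "depends_only_on X F"
  shows "depends_only_on X (sensitive F x)"
  unfolding depends_only_on_def sensitive_def
proof (intro allI impI)
  fix V W :: "nat \<Rightarrow> bool"
  assume VW: "\<forall>y\<in>X. V y = W y"
  have "F (V(x := b)) = F (W(x := b))" for b
    using depends_only_on_upd[OF assms, of x b] VW unfolding depends_only_on_def by blast
  then show "(F (V(x := False)) \<noteq> F (V(x := True))) = (F (W(x := False)) \<noteq> F (W(x := True)))"
    by simp
qed

lemma binary_essential_if_sensitivity_varies:
  assumes F: "depends_only_on X F" "finite X" and "sensitive F x U" "\<not> sensitive F x V"
  shows "\<exists>y C. x \<noteq> y \<and> binary_essential (\<lambda>s t. F (C(x := s, y := t)))"
proof -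
  obtain C y where Cy: "sensitive F x C \<noteq> sensitive F x (C(y := \<not> C y))"
    using exists_sensitive_flip[OF depends_only_on_sensitive[OF F(1)] F(2)] assms(3,4) by blast
  have "x \<noteq> y"
  proof
    assume "x = y"
    with Cy show False by (simp add: sensitive_def)
  qed
  define b where "b s t = F (C(x := s, y := t))" for s t
  have b: "sensitive F x (C(y := t)) = (b False t \<noteq> b True t)" for t
    using \<open>x \<noteq> y\<close> unfolding sensitive_def b_def by (simp add: fun_upd_twist)
  have "(b False (C y) \<noteq> b True (C y)) \<noteq> (b False (\<not> C y) \<noteq> b True (\<not> C y))"
    using Cy b[of "C y"] b[of "\<not> C y"] by simp
  then have "binary_essential b"
    unfolding binary_essential_def by (cases "C y") (auto simp: ex_bool_eq)
  with \<open>x \<noteq> y\<close> show ?thesis unfolding b_def by blast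
qed

lemma binary_essential_if_always_sensitive:
  assumes F: "depends_only_on X F" "finite X" and sens: "\<forall>V. sensitive F x V"
    and "\<not> essentially_unary F"
  shows "\<exists>y C. x \<noteq> y \<and> binary_essential (\<lambda>s t. F (C(x := s, y := t)))"
proof -
  define H where "H V = F (V(x := False))" for V
  have "\<exists>V W. H V \<noteq> H W"
  proof (rule ccontr)
    assume "\<not> ?thesis"
    then have H: "F (V(x := False)) = F (\<lambda>_. False)" for V
      unfolding H_def by (metis fun_upd_idem_iff)
    have "F V = (V x = (\<not> F (\<lambda>_. False)))" for V
      using sens[rule_format, of V] H[of V] unfolding sensitive_def
      by (cases "V x") (auto simp: fun_upd_idem)
    with \<open>\<not> essentially_unary F\<close> show False unfolding essentially_unary_def by blast
  qed
  then obtain C y where Cy: "H C \<noteq> H (C(y := \<not> C y))"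
    using exists_sensitive_flip[OF depends_only_on_upd[OF F(1)] F(2)] unfolding H_def by blast
  have "x \<noteq> y"
  proof
    assume "x = y"
    with Cy show False by (simp add: H_def)
  qed
  define b where "b s t = F (C(x := s, y := t))" for s t
  have "b False t \<noteq> b True t" for t
    using sens[rule_format, of "C(y := t)"] \<open>x \<noteq> y\<close>
    unfolding sensitive_def b_def by (simp add: fun_upd_twist)
  moreover have "C(x := False, y := C y) = C(x := False)"
    using \<open>x \<noteq> y\<close> by (simp add: fun_upd_idem_iff)
  with Cy \<open>x \<noteq> y\<close> have "b False (C y) \<noteq> b False (\<not> C y)"
    unfolding b_def H_def by (simp add: fun_upd_twist)
  ultimately have "binary_essential b"
    unfolding binary_essential_def by (cases "C y") (auto simp: ex_bool_eq)
  with \<open>x \<noteq> y\<close> show ?thesis unfolding b_def by blast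
qed

lemma exists_binary_essential_restriction:
  assumes F: "depends_only_on X F" "finite X" and "\<not> essentially_unary F"
  shows "\<exists>x y C. x \<noteq> y \<and> binary_essential (\<lambda>s t. F (C(x := s, y := t)))"
proof -
  obtain V where "F V \<noteq> F (\<lambda>_. False)"
    using assms(3) unfolding essentially_unary_def by blast
  then obtain U x where Ux: "F U \<noteq> F (U(x := \<not> U x))"
    using exists_sensitive_flip[OF F] by blast
  then have "sensitive F x U" unfolding sensitive_def by (cases "U x") (auto simp: fun_upd_idem)
  show ?thesis
  proof (cases "\<forall>V. sensitive F x V")
    case True
    from binary_essential_if_always_sensitive[OF F True assms(3)] show ?thesis by blast
  next
    case False
    then obtain V where "\<not> sensitive F x V" by blast
    from binary_essential_if_sensitivity_varies[OF F \<open>sensitive F x U\<close> this] show ?thesis by blast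
  qed
qed

abbreviation defines_neg :: "bfun set \<Rightarrow> bool" where
  "defines_neg Ops \<equiv> definable3 Ops (\<lambda>x y z. \<not> x)"

abbreviation defines_const :: "bfun set \<Rightarrow> bool \<Rightarrow> bool" where
  "defines_const Ops c \<equiv> definable3 Ops (\<lambda>x y z. c)"

lemma defines_hard_ternaryI:
  assumes "definable3 Ops h"
    and "(\<forall>x y z. h x y z = maj3 x y z) \<or> (\<forall>x y z. h x y z = xor3 x y z) \<or>
         (\<forall>x y z. h x y z = and_or3 x y z) \<or> (\<forall>x y z. h x y z = or_and3 x y z)"
  shows "defines_hard_ternary Ops"
  using assms(2) unfolding defines_hard_ternary_def
  by (elim disjE) (simp_all add: definable3_cong[OF assms(1)])

lemma definable3_const_xor: "defines_neg Ops \<Longrightarrow> definable3 Ops (\<lambda>x y z. c \<noteq> x)"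
  by (cases c) (simp_all add: definable3_arg1)

lemma idempotent_if_no_neg_no_const:
  assumes "\<not> defines_neg Ops" "\<not> defines_const Ops True" "\<not> defines_const Ops False"
    and f: "definable3 Ops f"
  shows "f True True True \<and> \<not> f False False False"
proof -
  have diag: "definable3 Ops (\<lambda>x y z. f x x x)"
    by (rule definable3_comp[OF f definable3_arg1 definable3_arg1 definable3_arg1])
  show ?thesis
  proof (rule ccontr)
    assume "\<not> ?thesis"
    then consider "\<not> f True True True" "\<not> f False False False"
      | "\<not> f True True True" "f False False False" | "f True True True" "f False False False"
      by blast
    then show False
    proof cases
      case 1
      then have "defines_const Ops False"
        by (intro definable3_cong[OF diag]) (simp add: all_bool_eq)
      with assms(3) show False by simp
    next
      case 2
      then have "defines_neg Ops" by (intro definable3_cong[OF diag]) (simp add: all_bool_eq)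
      with assms(1) show False by simp
    next
      case 3
      then have "defines_const Ops True" by (intro definable3_cong[OF diag]) (simp add: all_bool_eq)
      with assms(2) show False by simp
    qed
  qed
qed

lemma self_dual_if_neg_no_const:
  assumes neg: "defines_neg Ops" and "\<not> defines_const Ops True" "\<not> defines_const Ops False"
    and f: "definable3 Ops f"
  shows "f (\<not> a) (\<not> b) (\<not> c) = (\<not> f a b c)"
proof (rule ccontr)
  assume h: "f (\<not> a) (\<not> b) (\<not> c) \<noteq> (\<not> f a b c)"
  have "definable3 Ops (\<lambda>x y z. f ((\<not> a) \<noteq> x) ((\<not> b) \<noteq> x) ((\<not> c) \<noteq> x))"
    by (rule definable3_comp[OF f definable3_const_xor[OF neg] definable3_const_xor[OF neg]
          definable3_const_xor[OF neg]])
  then have "defines_const Ops (f a b c)"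
    by (rule definable3_cong) (use h in \<open>simp add: all_bool_eq\<close>)
  with assms(2,3) show False by (cases "f a b c") simp_all
qed

lemma definable3_maj3_of_and_or:
  assumes A: "definable3 Ops (\<lambda>x y z. x \<and> y)" and O: "definable3 Ops (\<lambda>x y z. x \<or> y)"
  shows "definable3 Ops maj3"
proof -
  have "definable3 Ops (\<lambda>x y z. (x \<and> y) \<or> ((x \<or> y) \<and> z))"
    by (rule definable3_comp[OF O A definable3_comp[OF A O definable3_arg3 definable3_arg3] definable3_arg3])
  then show ?thesis by (rule definable3_cong) (auto simp: maj3_def)
qed

lemma definable3_maj3_of_and_neg:
  assumes neg: "defines_neg Ops" and A: "definable3 Ops (\<lambda>x y z. x \<and> y)"
  shows "definable3 Ops maj3"
proof -
  have "definable3 Ops (\<lambda>x y z. \<not> y)"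
    by (rule definable3_comp[OF neg definable3_arg2 definable3_arg2 definable3_arg2])
  then have nor: "definable3 Ops (\<lambda>x y z. \<not> x \<and> \<not> y)"
    by (rule definable3_comp[OF A neg _ definable3_arg3])
  have "definable3 Ops (\<lambda>x y z. \<not> (\<not> x \<and> \<not> y))"
    by (rule definable3_comp[OF neg nor nor nor])
  then have "definable3 Ops (\<lambda>x y z. x \<or> y)" by (rule definable3_cong) auto
  with A show ?thesis by (rule definable3_maj3_of_and_or)
qed

lemma exists_nonmonotone_ternary:
  assumes "definable Ops F" "\<not> mono F"
  obtains g where "definable3 Ops g" "g False False True" "\<not> g True False True"
proof -
  obtain X where "finite X" "depends_only_on X F"
    using definable_depends_only_on_finite[OF assms(1)] .
  then obtain U x where Ux: "\<not> U x" "F U" "\<not> F (U(x := True))"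
    using exists_monotone_flip[OF _ _ assms(2)] by blast
  define \<sigma> where "\<sigma> v a b c = (if v = x then a else if U v then c else (b::bool))" for v a b c
  have "definable3 Ops (\<sigma> v)" for v
    unfolding \<sigma>_def
    by (cases "v = x"; cases "U v") (simp_all add: definable3_arg1 definable3_arg2 definable3_arg3)
  with assms(1) have g: "definable3 Ops (\<lambda>a b c. F (\<lambda>v. \<sigma> v a b c))" by (rule definable3_subst)
  have "(\<lambda>v. \<sigma> v False False True) = U" using Ux(1) unfolding \<sigma>_def by (auto simp: fun_eq_iff)
  with Ux(2) have "F (\<lambda>v. \<sigma> v False False True)" by simp
  moreover have "(\<lambda>v. \<sigma> v True False True) = U(x := True)" unfolding \<sigma>_def
    by (auto simp: fun_eq_iff)
  with Ux(3) have "\<not> F (\<lambda>v. \<sigma> v True False True)" by simp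
  ultimately show thesis by (rule that[OF g])
qed

lemma hard_of_nonmonotone_const_False:
  assumes g: "definable3 Ops g" "g False False True" "\<not> g True False True"
    and "\<not> defines_neg Ops" and C0: "defines_const Ops False"
  shows "defines_hard_ternary Ops"
proof -
  have diag: "definable3 Ops (\<lambda>x y z. g x False x)"
    by (rule definable3_comp[OF g(1) definable3_arg1 C0 definable3_arg1])
  have g0: "\<not> g False False False"
  proof
    assume "g False False False"
    then have "defines_neg Ops"
      by (intro definable3_cong[OF diag]) (use g(2,3) in \<open>simp add: all_bool_eq\<close>)
    with \<open>\<not> defines_neg Ops\<close> show False by simp
  qed
  have h1: "definable3 Ops (\<lambda>x y z. g x False y)"
    by (rule definable3_comp[OF g(1) definable3_arg1 C0 definable3_arg2])
  have h2: "definable3 Ops (\<lambda>x y z. g y False x)"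
    by (rule definable3_comp[OF g(1) definable3_arg2 C0 definable3_arg1])
  have xor: "definable3 Ops (\<lambda>x y z. g (g x False y) False z)"
    by (rule definable3_comp[OF h1 h1 definable3_arg3 definable3_arg3])
  have and_or: "definable3 Ops (\<lambda>x y z. g (g z False (g y False x)) False x)"
    by (rule definable3_comp[OF h2 definable3_arg1 definable3_comp[OF h2 h2 definable3_arg3 definable3_arg3] definable3_arg3])
  show ?thesis
    using defines_hard_ternaryI[OF xor] defines_hard_ternaryI[OF and_or] g(2,3) g0
    by (cases "g True False False") (simp_all add: all_bool_eq xor3_def and_or3_def)
qed

lemma hard_of_nonmonotone_const_True:
  assumes g: "definable3 Ops g" "g False False True" "\<not> g True False True"
    and "\<not> defines_neg Ops" and C1: "defines_const Ops True"
  shows "defines_hard_ternary Ops"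
proof -
  have diag: "definable3 Ops (\<lambda>x y z. g x x True)"
    by (rule definable3_comp[OF g(1) definable3_arg1 definable3_arg1 C1])
  have g1: "g True True True"
  proof (rule ccontr)
    assume "\<not> g True True True"
    then have "defines_neg Ops"
      by (intro definable3_cong[OF diag]) (use g(2,3) in \<open>simp add: all_bool_eq\<close>)
    with \<open>\<not> defines_neg Ops\<close> show False by simp
  qed
  have h1: "definable3 Ops (\<lambda>x y z. g x y True)"
    by (rule definable3_comp[OF g(1) definable3_arg1 definable3_arg2 C1])
  have h2: "definable3 Ops (\<lambda>x y z. g y x True)"
    by (rule definable3_comp[OF g(1) definable3_arg2 definable3_arg1 C1])
  have xor: "definable3 Ops (\<lambda>x y z. g (g x y True) z True)"
    by (rule definable3_comp[OF h1 h1 definable3_arg3 definable3_arg3])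
  have or_and: "definable3 Ops (\<lambda>x y z. g (g z (g y x True) True) x True)"
    by (rule definable3_comp[OF h2 definable3_arg1 definable3_comp[OF h2 h2 definable3_arg3 definable3_arg3] definable3_arg3])
  show ?thesis
    using defines_hard_ternaryI[OF xor] defines_hard_ternaryI[OF or_and] g(2,3) g1
    by (cases "g False True True") (simp_all add: all_bool_eq xor3_def or_and3_def)
qed

lemma exists_ternary_binary_essential:
  assumes neg: "defines_neg Ops" and F: "definable Ops F" "\<not> essentially_unary F"
  obtains G where "definable3 Ops G" "binary_essential (\<lambda>s t. G s t True)"
proof -
  obtain X where X: "finite X" "depends_only_on X F"
    using definable_depends_only_on_finite[OF F(1)] .
  obtain x y C where "x \<noteq> y" and b: "binary_essential (\<lambda>s t. F (C(x := s, y := t)))"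
    using exists_binary_essential_restriction[OF X(2,1) F(2)] by blast
  have nz: "definable3 Ops (\<lambda>x y z. \<not> z)"
    by (rule definable3_comp[OF neg definable3_arg3 definable3_arg3 definable3_arg3])
  define \<sigma> where "\<sigma> v s t w = (if v = x then s else if v = y then t else if C v then w else \<not> w)"
    for v s t w
  have "definable3 Ops (\<sigma> v)" for v
    unfolding \<sigma>_def by (cases "v = x"; cases "v = y"; cases "C v")
      (simp_all add: definable3_arg1 definable3_arg2 definable3_arg3 nz)
  with F(1) have G: "definable3 Ops (\<lambda>s t w. F (\<lambda>v. \<sigma> v s t w))" by (rule definable3_subst)
  have "(\<lambda>v. \<sigma> v s t True) = C(x := s, y := t)" for s t
    using \<open>x \<noteq> y\<close> unfolding \<sigma>_def by (auto simp: fun_eq_iff)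
  with b have "binary_essential (\<lambda>s t. F (\<lambda>v. \<sigma> v s t True))" by simp
  then show thesis by (rule that[OF G])
qed

lemma hard_of_neg_const:
  assumes neg: "defines_neg Ops" and C: "defines_const Ops True \<or> defines_const Ops False"
    and G: "definable3 Ops G" "binary_essential (\<lambda>s t. G s t True)"
  shows "defines_hard_ternary Ops"
proof -
  have C1: "defines_const Ops True"
  proof (cases "defines_const Ops True")
    case False
    with C have C0: "defines_const Ops False" by simp
    have "definable3 Ops (\<lambda>x y z. \<not> False)" by (rule definable3_comp[OF neg C0 C0 C0])
    then show ?thesis by simp
  qed
  have b: "definable3 Ops (\<lambda>x y z. G x y True)"
    by (rule definable3_comp[OF G(1) definable3_arg1 definable3_arg2 C1])
  have bb: "definable3 Ops (\<lambda>x y z. G (G x y True) z True)"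
    by (rule definable3_comp[OF b b definable3_arg3 definable3_arg3])
  from binary_essential_cases[OF G(2)] show ?thesis
  proof (elim disjE exE)
    assume "\<forall>s t. G s t True = (s \<noteq> t)"
    then show ?thesis by (intro defines_hard_ternaryI[OF bb]) (simp add: xor3_def all_bool_eq)
  next
    assume "\<forall>s t. G s t True = (s = t)"
    then show ?thesis by (intro defines_hard_ternaryI[OF bb]) (auto simp: xor3_def)
  next
    fix \<alpha> \<beta> \<gamma> assume and_like: "\<forall>s t. G s t True = (\<gamma> \<noteq> ((\<alpha> \<noteq> s) \<and> (\<beta> \<noteq> t)))"
    have "definable3 Ops (\<lambda>x y z. \<beta> \<noteq> y)"
      by (rule definable3_comp[OF definable3_const_xor[OF neg] definable3_arg2 definable3_arg2 definable3_arg2])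
    then have m: "definable3 Ops (\<lambda>x y z. G (\<alpha> \<noteq> x) (\<beta> \<noteq> y) True)"
      by (rule definable3_comp[OF b definable3_const_xor[OF neg] _ definable3_arg3])
    have "definable3 Ops (\<lambda>x y z. \<gamma> \<noteq> G (\<alpha> \<noteq> x) (\<beta> \<noteq> y) True)"
      by (rule definable3_comp[OF definable3_const_xor[OF neg] m m m])
    then have "definable3 Ops (\<lambda>x y z. x \<and> y)"
      by (rule definable3_cong) (cases \<alpha>; cases \<beta>; cases \<gamma>; simp add: and_like)
    then have "definable3 Ops maj3" by (rule definable3_maj3_of_and_neg[OF neg])
    then show ?thesis unfolding defines_hard_ternary_def by simp
  qed
qed

text \<open>Without constants, every definable function is self-dual, so the restriction of G to
  w = False is determined by its restriction to w = True.\<close>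

lemma hard_of_neg_no_const:
  assumes neg: "defines_neg Ops" and nc: "\<not> defines_const Ops True" "\<not> defines_const Ops False"
    and G: "definable3 Ops G" "binary_essential (\<lambda>s t. G s t True)"
  shows "defines_hard_ternary Ops"
proof -
  have G_False: "G s t False = (\<not> G (\<not> s) (\<not> t) True)" for s t
    using self_dual_if_neg_no_const[OF neg nc G(1), of "\<not> s" "\<not> t" True] by simp
  have nG: "definable3 Ops (\<lambda>x y z. \<not> G x y z)" by (rule definable3_comp[OF neg G(1) G(1) G(1)])
  from binary_essential_cases[OF G(2)] show ?thesis
  proof (elim disjE exE)
    assume "\<forall>s t. G s t True = (s \<noteq> t)"
    then show ?thesis
      by (intro defines_hard_ternaryI[OF nG]) (simp add: G_False xor3_def all_bool_eq)
  next
    assume "\<forall>s t. G s t True = (s = t)"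
    then show ?thesis
      by (intro defines_hard_ternaryI[OF G(1)]) (simp add: G_False xor3_def all_bool_eq)
  next
    fix \<alpha> \<beta> \<gamma> assume and_like: "\<forall>s t. G s t True = (\<gamma> \<noteq> ((\<alpha> \<noteq> s) \<and> (\<beta> \<noteq> t)))"
    have "definable3 Ops (\<lambda>x y z. \<beta> \<noteq> y)"
      by (rule definable3_comp[OF definable3_const_xor[OF neg] definable3_arg2 definable3_arg2 definable3_arg2])
    moreover have "definable3 Ops (\<lambda>x y z. \<not> z)"
      by (rule definable3_comp[OF neg definable3_arg3 definable3_arg3 definable3_arg3])
    ultimately have m: "definable3 Ops (\<lambda>x y z. G (\<alpha> \<noteq> x) (\<beta> \<noteq> y) (\<not> z))"
      by (rule definable3_comp[OF G(1) definable3_const_xor[OF neg]])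
    have "definable3 Ops (\<lambda>x y z. \<gamma> \<noteq> G (\<alpha> \<noteq> x) (\<beta> \<noteq> y) (\<not> z))"
      by (rule definable3_comp[OF definable3_const_xor[OF neg] m m m])
    then show ?thesis
      by (rule defines_hard_ternaryI)
        (cases \<alpha>; cases \<beta>; cases \<gamma>; simp add: all_bool_eq G_False and_like maj3_def)
  qed
qed

lemma hard_of_neg_not_unary:
  assumes "defines_neg Ops" "definable Ops F" "\<not> essentially_unary F"
  shows "defines_hard_ternary Ops"
proof -
  obtain G where "definable3 Ops G" "binary_essential (\<lambda>s t. G s t True)"
    using exists_ternary_binary_essential[OF assms] .
  then show ?thesis
    using hard_of_neg_const[OF assms(1)] hard_of_neg_no_const[OF assms(1)] by blast
qed

definition mono3 :: "(bool \<Rightarrow> bool \<Rightarrow> bool \<Rightarrow> bool) \<Rightarrow> bool" where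
  "mono3 g \<longleftrightarrow> (\<forall>a b c a' b' c'. (a \<longrightarrow> a') \<longrightarrow> (b \<longrightarrow> b') \<longrightarrow> (c \<longrightarrow> c') \<longrightarrow> g a b c \<longrightarrow> g a' b' c')"

lemma mono3_subst:
  assumes "mono F" "\<And>v. mono3 (\<sigma> v)"
  shows "mono3 (\<lambda>a b c. F (\<lambda>v. \<sigma> v a b c))"
  unfolding mono3_def
proof (intro allI impI)
  fix a b c a' b' c'
  assume le: "a \<longrightarrow> a'" "b \<longrightarrow> b'" "c \<longrightarrow> c'" and F: "F (\<lambda>v. \<sigma> v a b c)"
  have "\<sigma> v a b c \<Longrightarrow> \<sigma> v a' b' c'" for v
    using assms(2)[of v, unfolded mono3_def, rule_format,
        where a = a and b = b and c = c and a' = a' and b' = b' and c' = c'] le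
    by blast
  then have "(\<lambda>v. \<sigma> v a b c) \<le> (\<lambda>v. \<sigma> v a' b' c')" by (simp add: le_fun_def)
  from monoD[OF assms(1) this] F show "F (\<lambda>v. \<sigma> v a' b' c')" by (simp add: le_bool_def)
qed

lemma mono3_cases:
  assumes m: "mono3 g" and v: "g False True True" "g True False True" "\<not> g False False True"
  shows "(\<forall>x y z. g x y z = and_or3 z x y) \<or> (\<forall>x y z. g x y z = maj3 x y z) \<or>
         (\<forall>x y z. g x y z = or_and3 x y z) \<or> (\<forall>x y z. g x y z = or_and3 y x z) \<or>
         (\<forall>x y z. g x y z = (x \<or> y))"
proof -
  note m' = m[unfolded mono3_def, rule_format]
  have "\<not> g False False False"
    using m'[where a = False and b = False and c = False and a' = False and b' = False and c' = True] v(3)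
    by auto
  moreover have "g True True True"
    using m'[where a = False and b = True and c = True and a' = True and b' = True and c' = True] v(1)
    by auto
  moreover have "g True False False \<longrightarrow> g True True False"
    using m'[where a = True and b = False and c = False and a' = True and b' = True and c' = False]
    by auto
  moreover have "g False True False \<longrightarrow> g True True False"
    using m'[where a = False and b = True and c = False and a' = True and b' = True and c' = False]
    by auto
  ultimately show ?thesis using v
    by (cases "g True False False"; cases "g False True False"; cases "g True True False")
       (simp_all add: all_bool_eq and_or3_def or_and3_def maj3_def)
qed

lemma hard_or_disj_of_mono3:
  assumes g: "definable3 Ops g" "mono3 g" "g False True True" "g True False True" "\<not> g False False True"
  shows "defines_hard_ternary Ops \<or> definable3 Ops (\<lambda>x y z. x \<or> y)"
proof -
  have rot: "definable3 Ops (\<lambda>x y z. g y z x)"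
    by (rule definable3_comp[OF g(1) definable3_arg2 definable3_arg3 definable3_arg1])
  have swap: "definable3 Ops (\<lambda>x y z. g y x z)"
    by (rule definable3_comp[OF g(1) definable3_arg2 definable3_arg1 definable3_arg3])
  from mono3_cases[OF g(2-5)] show ?thesis
  proof (elim disjE)
    assume "\<forall>x y z. g x y z = (x \<or> y)"
    then have "definable3 Ops (\<lambda>x y z. x \<or> y)" by (rule definable3_cong[OF g(1)])
    then show ?thesis ..
  qed (use defines_hard_ternaryI[OF rot] defines_hard_ternaryI[OF g(1)]
        defines_hard_ternaryI[OF swap] in simp_all)
qed

lemma hard_or_conj_of_mono3:
  assumes g: "definable3 Ops g" "mono3 g" "\<not> g True False False" "\<not> g False True False" "g True True False"
  shows "defines_hard_ternary Ops \<or> definable3 Ops (\<lambda>x y z. x \<and> y)"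
proof -
  define d where "d x y z \<longleftrightarrow> \<not> g (\<not> x) (\<not> y) (\<not> z)" for x y z
  have g_d: "g x y z = (\<not> d (\<not> x) (\<not> y) (\<not> z))" for x y z by (simp add: d_def)
  have "mono3 d" unfolding mono3_def d_def
  proof (intro allI impI)
    fix a b c a' b' c'
    assume "a \<longrightarrow> a'" "b \<longrightarrow> b'" "c \<longrightarrow> c'" "\<not> g (\<not> a) (\<not> b) (\<not> c)"
    then show "\<not> g (\<not> a') (\<not> b') (\<not> c')"
      using g(2)[unfolded mono3_def, rule_format,
          where a = "\<not> a'" and b = "\<not> b'" and c = "\<not> c'" and a' = "\<not> a" and b' = "\<not> b" and c' = "\<not> c"]
      by auto
  qed
  moreover have "d False True True" "d True False True" "\<not> d False False True"
    using g(3-5) by (simp_all add: d_def)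
  ultimately have cases: "(\<forall>x y z. d x y z = and_or3 z x y) \<or> (\<forall>x y z. d x y z = maj3 x y z) \<or>
         (\<forall>x y z. d x y z = or_and3 x y z) \<or> (\<forall>x y z. d x y z = or_and3 y x z) \<or>
         (\<forall>x y z. d x y z = (x \<or> y))"
    by (rule mono3_cases)
  have rot: "definable3 Ops (\<lambda>x y z. g y z x)"
    by (rule definable3_comp[OF g(1) definable3_arg2 definable3_arg3 definable3_arg1])
  have swap: "definable3 Ops (\<lambda>x y z. g y x z)"
    by (rule definable3_comp[OF g(1) definable3_arg2 definable3_arg1 definable3_arg3])
  from cases show ?thesis
  proof (elim disjE)
    assume "\<forall>x y z. d x y z = (x \<or> y)"
    then have "definable3 Ops (\<lambda>x y z. x \<and> y)" by (intro definable3_cong[OF g(1)]) (simp add: g_d)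
    then show ?thesis ..
  qed (use defines_hard_ternaryI[OF rot] defines_hard_ternaryI[OF g(1)]
        defines_hard_ternaryI[OF swap] in
        \<open>simp_all add: g_d and_or3_def or_and3_def maj3_def all_bool_eq\<close>)
qed

lemma mono3_proj:
  "mono3 (\<lambda>a b c. a)" "mono3 (\<lambda>a b c. b)" "mono3 (\<lambda>a b c. c)"
  by (simp_all add: mono3_def)

lemma exists_mono3_of_not_conj:
  assumes F: "definable Ops F" "mono F" "\<not> preserves (\<and>) F"
  obtains g where "definable3 Ops g" "mono3 g"
    "g False True True" "g True False True" "\<not> g False False True"
proof -
  from F(3) obtain V W where VW: "F (\<lambda>v. V v \<and> W v) \<noteq> (F V \<and> F W)"
    unfolding preserves_def by auto
  have "F (\<lambda>v. V v \<and> W v) \<Longrightarrow> F V" "F (\<lambda>v. V v \<and> W v) \<Longrightarrow> F W"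
    by (erule mono_boolD[OF F(2)], simp)+
  with VW have FV: "F V" "F W" "\<not> F (\<lambda>v. V v \<and> W v)" by auto
  define \<sigma> where "\<sigma> v y z w = (if V v then (if W v then w else z) else y)" for v and y z w :: bool
  have \<sigma>_definable: "definable3 Ops (\<sigma> v)" for v
    unfolding \<sigma>_def
    by (cases "V v"; cases "W v") (simp_all add: definable3_arg1 definable3_arg2 definable3_arg3)
  have \<sigma>_mono: "mono3 (\<sigma> v)" for v
    unfolding \<sigma>_def by (cases "V v"; cases "W v") (simp_all add: mono3_proj)
  have "(\<lambda>v. \<sigma> v False True True) = V" "(\<lambda>v. \<sigma> v False False True) = (\<lambda>v. V v \<and> W v)"
    unfolding \<sigma>_def by (auto simp: fun_eq_iff)
  with FV(1,3) have 1: "F (\<lambda>v. \<sigma> v False True True)" and 3: "\<not> F (\<lambda>v. \<sigma> v False False True)"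
    by simp_all
  have 2: "F (\<lambda>v. \<sigma> v True False True)"
    by (rule mono_boolD[OF F(2) FV(2)]) (simp add: \<sigma>_def)
  show thesis
    by (rule that[OF definable3_subst[OF F(1) \<sigma>_definable] mono3_subst[OF F(2) \<sigma>_mono] 1 2 3])
qed

lemma exists_mono3_of_not_disj:
  assumes F: "definable Ops F" "mono F" "\<not> preserves (\<or>) F"
  obtains g where "definable3 Ops g" "mono3 g"
    "\<not> g True False False" "\<not> g False True False" "g True True False"
proof -
  from F(3) obtain V W where VW: "F (\<lambda>v. V v \<or> W v) \<noteq> (F V \<or> F W)"
    unfolding preserves_def by auto
  have "F V \<Longrightarrow> F (\<lambda>v. V v \<or> W v)" "F W \<Longrightarrow> F (\<lambda>v. V v \<or> W v)"
    by (erule mono_boolD[OF F(2)], simp)+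
  with VW have FV: "\<not> F V" "\<not> F W" "F (\<lambda>v. V v \<or> W v)" by auto
  define \<sigma> where "\<sigma> v y z w = (if V v then y else if W v then z else w)" for v and y z w :: bool
  have \<sigma>_definable: "definable3 Ops (\<sigma> v)" for v
    unfolding \<sigma>_def
    by (cases "V v"; cases "W v") (simp_all add: definable3_arg1 definable3_arg2 definable3_arg3)
  have \<sigma>_mono: "mono3 (\<sigma> v)" for v
    unfolding \<sigma>_def by (cases "V v"; cases "W v") (simp_all add: mono3_proj)
  have "(\<lambda>v. \<sigma> v True False False) = V" "(\<lambda>v. \<sigma> v True True False) = (\<lambda>v. V v \<or> W v)"
    unfolding \<sigma>_def by (auto simp: fun_eq_iff)
  with FV(1,3) have 1: "\<not> F (\<lambda>v. \<sigma> v True False False)" and 3: "F (\<lambda>v. \<sigma> v True True False)"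
    by simp_all
  have 2: "\<not> F (\<lambda>v. \<sigma> v False True False)"
  proof
    assume "F (\<lambda>v. \<sigma> v False True False)"
    then have "F W" by (rule mono_boolD[OF F(2)]) (simp add: \<sigma>_def split: if_splits)
    with FV(2) show False by simp
  qed
  show thesis
    by (rule that[OF definable3_subst[OF F(1) \<sigma>_definable] mono3_subst[OF F(2) \<sigma>_mono] 1 2 3])
qed

text \<open>Each of the sixteen idempotent functions with g(0,0,1) = 1 and g(1,0,1) = 0 becomes a hard
  function under one of the compositions below (found by computer search); the final simp call
  evaluates all of them in each of the sixteen cases.\<close>

lemma hard_of_idempotent_nonmonotone:
  assumes g: "definable3 Ops g" and v: "\<not> g False False False" "g True True True"
    "g False False True" "\<not> g True False True"
  shows "defines_hard_ternary Ops"
proof -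
  note x = definable3_arg1 and y = definable3_arg2 and z = definable3_arg3
  note comp = definable3_comp[OF g]
  have gxyz: "definable3 Ops (\<lambda>x y z. g x y z)" by (rule comp[OF x y z])
  have gyxz: "definable3 Ops (\<lambda>x y z. g y x z)" by (rule comp[OF y x z])
  have gyzx: "definable3 Ops (\<lambda>x y z. g y z x)" by (rule comp[OF y z x])
  have gzxg: "definable3 Ops (\<lambda>x y z. g z x (g x y z))" by (rule comp[OF z x gxyz])
  note hard = defines_hard_ternaryI[OF comp[OF y comp[OF z gxyz x] x]]
    defines_hard_ternaryI[OF comp[OF x gxyz comp[OF y z y]]]
    defines_hard_ternaryI[OF comp[OF gyzx z x]]
    defines_hard_ternaryI[OF comp[OF y x gxyz]]
    defines_hard_ternaryI[OF comp[OF y gxyz z]]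
    defines_hard_ternaryI[OF comp[OF gxyz z y]]
    defines_hard_ternaryI[OF comp[OF gxyz y z]]
    defines_hard_ternaryI[OF comp[OF z y gxyz]]
    defines_hard_ternaryI[OF gxyz]
    defines_hard_ternaryI[OF comp[OF z gxyz x]]
    defines_hard_ternaryI[OF comp[OF x z comp[OF z gxyz y]]]
    defines_hard_ternaryI[OF comp[OF gyxz x z]]
    defines_hard_ternaryI[OF comp[OF y x gzxg]]
  show ?thesis
    using v hard
    by (cases "g False True False"; cases "g True True False"; cases "g False True True";
        cases "g True False False")
      (simp_all add: all_bool_eq maj3_def xor3_def and_or3_def or_and3_def)
qed

lemma hard_of_mono_not_conj_not_disj:
  assumes F1: "definable Ops F1" "mono F1" "\<not> preserves (\<and>) F1"
    and F2: "definable Ops F2" "mono F2" "\<not> preserves (\<or>) F2"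
  shows "defines_hard_ternary Ops"
proof -
  obtain g1 where "definable3 Ops g1" "mono3 g1" "g1 False True True" "g1 True False True"
    "\<not> g1 False False True"
    using exists_mono3_of_not_conj[OF F1] .
  then have "defines_hard_ternary Ops \<or> definable3 Ops (\<lambda>x y z. x \<or> y)"
    by (rule hard_or_disj_of_mono3)
  moreover obtain g2 where "definable3 Ops g2" "mono3 g2" "\<not> g2 True False False"
    "\<not> g2 False True False" "g2 True True False"
    using exists_mono3_of_not_disj[OF F2] .
  then have "defines_hard_ternary Ops \<or> definable3 Ops (\<lambda>x y z. x \<and> y)"
    by (rule hard_or_conj_of_mono3)
  ultimately show ?thesis
    using definable3_maj3_of_and_or unfolding defines_hard_ternary_def by blast
qed

lemma hard_of_not_mono_not_unary:
  assumes "definable Ops F" "\<not> mono F" and F3: "definable Ops F3" "\<not> essentially_unary F3"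
  shows "defines_hard_ternary Ops"
proof -
  obtain g where g: "definable3 Ops g" "g False False True" "\<not> g True False True"
    using exists_nonmonotone_ternary[OF assms(1,2)] .
  consider "defines_neg Ops" | "\<not> defines_neg Ops" "defines_const Ops False"
    | "\<not> defines_neg Ops" "defines_const Ops True"
    | "\<not> defines_neg Ops" "\<not> defines_const Ops True" "\<not> defines_const Ops False"
    by blast
  then show ?thesis
  proof cases
    case 1
    then show ?thesis using hard_of_neg_not_unary F3 by blast
  next
    case 2
    then show ?thesis using hard_of_nonmonotone_const_False[OF g] by blast
  next
    case 3
    then show ?thesis using hard_of_nonmonotone_const_True[OF g] by blast
  next
    case 4
    then have "g True True True \<and> \<not> g False False False"
      by (rule idempotent_if_no_neg_no_const[OF _ _ _ g(1)])
    with g show ?thesis using hard_of_idempotent_nonmonotone by blast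
  qed
qed

lemma hard_if_not_conj_disj_unary:
  assumes F1: "definable Ops F1" "\<not> preserves (\<and>) F1"
    and F2: "definable Ops F2" "\<not> preserves (\<or>) F2"
    and F3: "definable Ops F3" "\<not> essentially_unary F3"
  shows "defines_hard_ternary Ops"
proof (cases "mono F1 \<and> mono F2")
  case True
  with F1 F2 show ?thesis by (intro hard_of_mono_not_conj_not_disj) auto
next
  case False
  with F1(1) F2(1) F3 show ?thesis using hard_of_not_mono_not_unary by blast
qed

section \<open>Lower bounds\<close>

definition poly_characterizable :: "bfun set \<Rightarrow> bool" where
  "poly_characterizable Ops \<longleftrightarrow> (\<exists>p :: real poly. \<forall>\<phi>. in_PL Ops \<phi> \<longrightarrow>
     (\<exists>E. finite E \<and> real (card E) \<le> poly p (real (dag_size \<phi>)) \<and> uniquely_characterizes Ops E \<phi>))"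

definition instantiate3 :: "form \<Rightarrow> form \<Rightarrow> form \<Rightarrow> form \<Rightarrow> form" where
  "instantiate3 \<psi> p q r = subst (\<lambda>v. if v = 0 then p else if v = 1 then q else r) \<psi>"

lemma instantiate3:
  assumes "in_PL Ops \<psi>" "\<forall>V. eval V \<psi> = f (V 0) (V 1) (V 2)"
  shows "in_PL Ops p \<Longrightarrow> in_PL Ops q \<Longrightarrow> in_PL Ops r \<Longrightarrow> in_PL Ops (instantiate3 \<psi> p q r)"
    and "eval V (instantiate3 \<psi> p q r) = f (eval V p) (eval V q) (eval V r)"
    and "dag_size (instantiate3 \<psi> p q r) \<le> dag_size \<psi> + card (subforms p \<union> subforms q \<union> subforms r)"
proof -
  define \<sigma> where "\<sigma> v = (if v = 0 then p else if v = 1 then q else r)" for v :: nat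
  show "in_PL Ops p \<Longrightarrow> in_PL Ops q \<Longrightarrow> in_PL Ops r \<Longrightarrow> in_PL Ops (instantiate3 \<psi> p q r)"
    unfolding instantiate3_def by (rule in_PL_subst[OF assms(1)]) auto
  show "eval V (instantiate3 \<psi> p q r) = f (eval V p) (eval V q) (eval V r)"
    unfolding instantiate3_def eval_subst using assms(2) by simp
  have "subforms (instantiate3 \<psi> p q r) \<subseteq> subst \<sigma> ` subforms \<psi> \<union> (\<Union>v\<in>vars \<psi>. subforms (\<sigma> v))"
    unfolding instantiate3_def \<sigma>_def[symmetric] by (rule subforms_subst)
  also have "\<dots> \<subseteq> subst \<sigma> ` subforms \<psi> \<union> (subforms p \<union> subforms q \<union> subforms r)"
    unfolding \<sigma>_def by (auto split: if_splits)
  finally have "dag_size (instantiate3 \<psi> p q r) \<le> card (subst \<sigma> ` subforms \<psi> \<union> (subforms p \<union> subforms q \<union> subforms r))"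
    unfolding dag_size_def by (intro card_mono) (simp_all add: finite_subforms)
  also have "\<dots> \<le> card (subst \<sigma> ` subforms \<psi>) + card (subforms p \<union> subforms q \<union> subforms r)"
    by (rule card_Un_le)
  also have "\<dots> \<le> dag_size \<psi> + card (subforms p \<union> subforms q \<union> subforms r)"
    unfolding dag_size_def using card_image_le[OF finite_subforms] by simp
  finally show "dag_size (instantiate3 \<psi> p q r) \<le> dag_size \<psi> + card (subforms p \<union> subforms q \<union> subforms r)" .
qed

lemma definable3_formula:
  assumes "definable3 Ops f"
  obtains \<psi> where "in_PL Ops \<psi>" "\<forall>V. eval V \<psi> = f (V 0) (V 1) (V 2)"
  using assms unfolding definable3_def definable_def by blast

text \<open>Finitely many examples cannot tell all variables apart; if y and y' agree on every
  example, then x0 + y + y' (mod 2) agrees with x0 on every example.\<close>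

lemma xor3_no_finite_characterization:
  assumes "definable3 Ops xor3"
  shows "\<not> (\<exists>E. finite E \<and> uniquely_characterizes Ops E (Var 0))"
proof
  assume "\<exists>E. finite E \<and> uniquely_characterizes Ops E (Var 0)"
  then obtain E where E: "finite E" "uniquely_characterizes Ops E (Var 0)" by blast
  obtain \<psi> where \<psi>: "in_PL Ops \<psi>" "\<forall>V. eval V \<psi> = xor3 (V 0) (V 1) (V 2)"
    using definable3_formula[OF assms] .
  define col where "col y = {e\<in>E. fst e y}" for y
  have "finite (col ` {1..})" by (rule finite_subset[of _ "Pow E"]) (auto simp: col_def E(1))
  then have "\<not> inj_on col {1..}" using finite_imageD infinite_Ici by blast
  then obtain y y' where yy: "1 \<le> y" "1 \<le> y'" "y \<noteq> y'" "col y = col y'"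
    unfolding inj_on_def by auto
  then have same: "fst e y = fst e y'" if "e \<in> E" for e
    using that unfolding col_def by blast
  define \<chi> where "\<chi> = instantiate3 \<psi> (Var 0) (Var y) (Var y')"
  have \<chi>: "in_PL Ops \<chi>" "eval V \<chi> = xor3 (V 0) (V y) (V y')" for V
    unfolding \<chi>_def using instantiate3[OF \<psi>] by auto
  have "\<forall>e\<in>E. fits \<chi> e"
    using E(2) same \<chi>(2) unfolding uniquely_characterizes_def fits_def by (auto simp: xor3_def)
  with E(2) \<chi>(1) have "equiv_form \<chi> (Var 0)" unfolding uniquely_characterizes_def by blast
  then have "eval (\<lambda>v. v = y) \<chi> = eval (\<lambda>v. v = y) (Var 0)" unfolding equiv_form_def by blast
  with \<chi>(2) yy show False by (simp add: xor3_def)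
qed

lemma xor3_not_poly_characterizable:
  assumes "definable3 Ops xor3"
  shows "\<not> poly_characterizable Ops"
  using xor3_no_finite_characterization[OF assms] unfolding poly_characterizable_def
  by (metis in_PL.simps(1))

lemma card_ge_pow_if_covers:
  assumes "finite E" "\<And>S. S \<subseteq> {..<m} \<Longrightarrow> \<exists>e\<in>E. \<kappa> (fst e) = S"
  shows "2 ^ m \<le> card E"
proof -
  have "Pow {..<m} \<subseteq> (\<lambda>e. \<kappa> (fst e)) ` E" using assms(2) by auto
  then have "card (Pow {..<m}) \<le> card ((\<lambda>e. \<kappa> (fst e)) ` E)"
    by (intro card_mono) (auto simp: assms(1))
  also have "\<dots> \<le> card E" by (rule card_image_le[OF assms(1)])
  finally show ?thesis by (simp add: card_Pow)
qed

lemma tendsto_power_div_pow2: "((\<lambda>n::nat. real n ^ k / 2 ^ n) \<longlonglongrightarrow> 0)"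
proof -
  have l2: "ln (2::real) > 0" by simp
  have f: "filterlim (\<lambda>n::nat. ln 2 * real n) at_top sequentially"
    by (rule filterlim_tendsto_pos_mult_at_top[OF tendsto_const l2 filterlim_real_sequentially])
  have "((\<lambda>n::nat. (ln 2 * real n) ^ k / exp (ln 2 * real n)) \<longlonglongrightarrow> 0)"
    using filterlim_compose[OF tendsto_power_div_exp_0 f] by (simp add: o_def)
  then have "((\<lambda>n::nat. (ln 2 * real n) ^ k / exp (ln 2 * real n) / (ln 2)^k) \<longlonglongrightarrow> 0 / (ln 2)^k)"
    by (intro tendsto_divide tendsto_const) auto
  moreover have "(\<lambda>n::nat. (ln 2 * real n) ^ k / exp (ln 2 * real n) / (ln 2)^k) = (\<lambda>n. real n ^ k / 2 ^ n)"
  proof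
    fix n :: nat
    have "exp (ln 2 * real n) = (2::real) ^ n"
      by (simp add: exp_of_nat2_mult)
    then show "(ln 2 * real n) ^ k / exp (ln 2 * real n) / (ln 2)^k = real n ^ k / 2 ^ n"
      using l2 by (simp add: power_mult_distrib)
  qed
  ultimately show ?thesis by simp
qed

lemma poly_le_sum_abs_coeff:
  fixes p :: "real poly" assumes "x \<ge> 1"
  shows "poly p x \<le> (\<Sum>i\<le>degree p. \<bar>coeff p i\<bar>) * x ^ degree p"
proof -
  have "poly p x = (\<Sum>i\<le>degree p. coeff p i * x ^ i)" by (rule poly_altdef)
  also have "\<dots> \<le> (\<Sum>i\<le>degree p. \<bar>coeff p i\<bar> * x ^ degree p)"
  proof (rule sum_mono)
    fix i assume "i \<in> {..degree p}"
    then have "x ^ i \<le> x ^ degree p" using assms by (intro power_increasing) auto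
    then have "\<bar>coeff p i\<bar> * x ^ i \<le> \<bar>coeff p i\<bar> * x ^ degree p" by (intro mult_left_mono) auto
    moreover have "coeff p i * x ^ i \<le> \<bar>coeff p i\<bar> * x ^ i" using assms
      by (intro mult_right_mono) auto
    ultimately show "coeff p i * x ^ i \<le> \<bar>coeff p i\<bar> * x ^ degree p" by linarith
  qed
  also have "\<dots> = (\<Sum>i\<le>degree p. \<bar>coeff p i\<bar>) * x ^ degree p" by (simp add: sum_distrib_right)
  finally show ?thesis .
qed

lemma poly_below_pow2:
  fixes p :: "real poly" and c :: nat
  shows "\<exists>n::nat. \<forall>x. 1 \<le> x \<longrightarrow> x \<le> real (c * (n + 1)) \<longrightarrow> poly p x < 2 ^ n"
proof -
  define C where "C = (\<Sum>i\<le>degree p. \<bar>coeff p i\<bar>)"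
  define k where "k = degree p"
  define M where "M = real (2 * c)"
  have C0: "C \<ge> 0" unfolding C_def by (intro sum_nonneg) auto
  have "((\<lambda>n::nat. C * M ^ k * (real n ^ k / 2 ^ n)) \<longlonglongrightarrow> C * M ^ k * 0)"
    by (intro tendsto_mult tendsto_const tendsto_power_div_pow2)
  then have "eventually (\<lambda>n. C * M ^ k * (real n ^ k / 2 ^ n) < 1) sequentially"
    by (intro order_tendstoD) auto
  then obtain N where N: "\<And>n. n \<ge> N \<Longrightarrow> C * M ^ k * (real n ^ k / 2 ^ n) < 1"
    by (auto simp: eventually_sequentially)
  define n where "n = N + 1"
  have n1: "n \<ge> 1" "n \<ge> N" unfolding n_def by auto
  show ?thesis
  proof (intro exI allI impI)
    fix x :: real assume x1: "1 \<le> x" and xb: "x \<le> real (c * (n + 1))"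
    have "real c * 1 \<le> real c * real n" using n1 by (intro mult_left_mono) auto
    then have "real (c * (n + 1)) \<le> M * real n" unfolding M_def by simp
    then have xM: "x \<le> M * real n" using xb by linarith
    have "poly p x \<le> C * x ^ k" using poly_le_sum_abs_coeff[OF x1] unfolding C_def k_def .
    also have "\<dots> \<le> C * (M * real n) ^ k" using x1 xM C0
      by (intro mult_left_mono power_mono) auto
    also have "\<dots> = C * M ^ k * (real n ^ k / 2 ^ n) * 2 ^ n" by (simp add: power_mult_distrib)
    also have "\<dots> < 1 * 2 ^ n" using N[OF n1(2)] by (intro mult_strict_right_mono) auto
    finally show "poly p x < 2 ^ n" by simp
  qed
qed

definition var_x :: "nat \<Rightarrow> form" where
  "var_x i = Var (2 * i + 2)"

definition var_y :: "nat \<Rightarrow> form" where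
  "var_y i = Var (2 * i + 3)"

definition var_z :: "nat set \<Rightarrow> nat \<Rightarrow> form" where
  "var_z S i = (if i \<in> S then var_x i else var_y i)"

definition assignment :: "bool \<Rightarrow> bool \<Rightarrow> (nat \<Rightarrow> bool) \<Rightarrow> (nat \<Rightarrow> bool) \<Rightarrow> nat \<Rightarrow> bool" where
  "assignment c0 c1 X Y v =
     (if v = 0 then c0 else if v = 1 then c1 else if even v then X ((v - 2) div 2) else Y ((v - 3) div 2))"

lemma assignment_simps [simp]:
  "assignment c0 c1 X Y 0 = c0" "assignment c0 c1 X Y 1 = c1"
  "assignment c0 c1 X Y (2 * i + 2) = X i" "assignment c0 c1 X Y (2 * i + 3) = Y i"
  unfolding assignment_def by auto

lemma ex_less_Suc_iff: "(\<exists>i<Suc k. P i) = (P k \<or> (\<exists>i<k. P i))"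
  by (metis less_Suc_eq)

lemma all_less_Suc_iff: "(\<forall>i<Suc k. P i) = (P k \<and> (\<forall>i<k. P i))"
  by (metis less_Suc_eq)

lemma eval_var_z: "eval V (var_z S i) = (if i \<in> S then V (2 * i + 2) else V (2 * i + 3))"
  by (simp add: var_z_def var_x_def var_y_def)

text \<open>The gadgets are switched between modes by the parameter variables 0 and 1. Wrapping
  \<open>dnf n\<close> into the disjunction gadget makes \<open>target n\<close> and \<open>variant n S\<close> agree in the modes
  where that gadget is constant. In the two principal modes \<open>conj_sem V True False\<close> is False
  and True respectively, so \<open>decoded_set\<close> reads S off the x-variables in both.\<close>

locale dnf_gadgets =
  fixes Ops :: "bfun set" and conj disj :: "form \<Rightarrow> form \<Rightarrow> form"
    and conj_sem disj_sem :: "(nat \<Rightarrow> bool) \<Rightarrow> bool \<Rightarrow> bool \<Rightarrow> bool" and conj_size disj_size :: nat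
  assumes in_PL_conj: "in_PL Ops p \<Longrightarrow> in_PL Ops q \<Longrightarrow> in_PL Ops (conj p q)"
    and in_PL_disj: "in_PL Ops p \<Longrightarrow> in_PL Ops q \<Longrightarrow> in_PL Ops (disj p q)"
    and eval_conj: "eval V (conj p q) = conj_sem V (eval V p) (eval V q)"
    and eval_disj: "eval V (disj p q) = disj_sem V (eval V p) (eval V q)"
    and dag_size_conj: "dag_size (conj p q) \<le> conj_size + card (subforms p \<union> subforms q)"
    and dag_size_disj: "dag_size (disj p q) \<le> disj_size + card (subforms p \<union> subforms q)"
    and modes: "(conj_sem V = (\<and>) \<and> (disj_sem V = (\<or>) \<or> disj_sem V = (\<and>) \<or> disj_sem V = (\<lambda>_ _. False)))
      \<or> (conj_sem V = (\<or>) \<and> (disj_sem V = (\<and>) \<or> disj_sem V = (\<or>) \<or> disj_sem V = (\<lambda>_ _. True)))"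
    and principal_mode:
      "(\<exists>c0 c1. \<forall>V. V 0 = c0 \<longrightarrow> V 1 = c1 \<longrightarrow> conj_sem V = (\<and>) \<and> disj_sem V = (\<or>))
     \<or> (\<exists>c0 c1. \<forall>V. V 0 = c0 \<longrightarrow> V 1 = c1 \<longrightarrow> conj_sem V = (\<or>) \<and> disj_sem V = (\<and>))"
begin

fun dnf :: "nat \<Rightarrow> form" where
  "dnf 0 = conj (var_x 0) (var_y 0)"
| "dnf (Suc k) = disj (conj (var_x (Suc k)) (var_y (Suc k))) (dnf k)"

fun clause :: "nat set \<Rightarrow> nat \<Rightarrow> form" where
  "clause S 0 = var_z S 0"
| "clause S (Suc k) = conj (var_z S (Suc k)) (clause S k)"

definition target :: "nat \<Rightarrow> form" where
  "target n = disj (dnf n) (dnf n)"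

definition variant :: "nat \<Rightarrow> nat set \<Rightarrow> form" where
  "variant n S = disj (target n) (clause S n)"

definition decoded_set :: "nat \<Rightarrow> (nat \<Rightarrow> bool) \<Rightarrow> nat set" where
  "decoded_set n V = {i. i < Suc n \<and> V (2 * i + 2) \<noteq> conj_sem V True False}"

lemma in_PL_target: "in_PL Ops (target n)"
proof -
  have "in_PL Ops (dnf k)" for k
    by (induction k) (auto intro!: in_PL_conj in_PL_disj simp: var_x_def var_y_def)
  then show ?thesis unfolding target_def by (intro in_PL_disj)
qed

lemma in_PL_variant: "in_PL Ops (variant n S)"
proof -
  have "in_PL Ops (clause S k)" for k
    by (induction k) (auto intro!: in_PL_conj simp: var_z_def var_x_def var_y_def)
  then show ?thesis unfolding variant_def by (intro in_PL_disj in_PL_target)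
qed

lemma eval_dnf:
  "conj_sem V = (\<and>) \<Longrightarrow> disj_sem V = (\<or>) \<Longrightarrow> eval V (dnf k) = (\<exists>i<Suc k. V (2 * i + 2) \<and> V (2 * i + 3))"
  "conj_sem V = (\<or>) \<Longrightarrow> disj_sem V = (\<and>) \<Longrightarrow> eval V (dnf k) = (\<forall>i<Suc k. V (2 * i + 2) \<or> V (2 * i + 3))"
  "conj_sem V = (\<and>) \<Longrightarrow> disj_sem V = (\<and>) \<Longrightarrow> eval V (dnf k) = (\<forall>i<Suc k. V (2 * i + 2) \<and> V (2 * i + 3))"
  "conj_sem V = (\<or>) \<Longrightarrow> disj_sem V = (\<or>) \<Longrightarrow> eval V (dnf k) = (\<exists>i<Suc k. V (2 * i + 2) \<or> V (2 * i + 3))"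
  by (induction k) (simp_all add: eval_conj eval_disj var_x_def var_y_def ex_less_Suc_iff all_less_Suc_iff)

lemma eval_clause:
  "conj_sem V = (\<and>) \<Longrightarrow> eval V (clause S k) = (\<forall>i<Suc k. eval V (var_z S i))"
  "conj_sem V = (\<or>) \<Longrightarrow> eval V (clause S k) = (\<exists>i<Suc k. eval V (var_z S i))"
  by (induction k) (simp_all add: eval_conj ex_less_Suc_iff all_less_Suc_iff)

lemma decoded_set_if_differ:
  assumes S: "S \<subseteq> {..<Suc n}" and d: "eval V (variant n S) \<noteq> eval V (target n)"
  shows "decoded_set n V = S"
proof -
  have target: "eval V (target n) = disj_sem V (eval V (dnf n)) (eval V (dnf n))"
    unfolding target_def eval_disj ..
  have variant: "eval V (variant n S) = disj_sem V (eval V (target n)) (eval V (clause S n))"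
    unfolding variant_def eval_disj ..
  from modes[of V] show ?thesis
  proof (elim disjE conjE)
    assume a: "conj_sem V = (\<and>)" and o: "disj_sem V = (\<or>)"
    have "\<not> (\<exists>i<Suc n. V (2 * i + 2) \<and> V (2 * i + 3))" "\<forall>i<Suc n. eval V (var_z S i)"
      using d target variant eval_dnf(1)[OF a o, of n] eval_clause(1)[OF a, of S n] o by auto
    then have "\<forall>i<Suc n. V (2 * i + 2) = (i \<in> S)" unfolding eval_var_z by (metis (full_types))
    with S a show ?thesis unfolding decoded_set_def by auto
  next
    assume a: "conj_sem V = (\<or>)" and o: "disj_sem V = (\<and>)"
    have "\<forall>i<Suc n. V (2 * i + 2) \<or> V (2 * i + 3)" "\<not> (\<exists>i<Suc n. eval V (var_z S i))"
      using d target variant eval_dnf(2)[OF a o, of n] eval_clause(2)[OF a, of S n] o by auto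
    then have "\<forall>i<Suc n. V (2 * i + 2) = (i \<notin> S)" unfolding eval_var_z by (metis (full_types))
    with S a show ?thesis unfolding decoded_set_def by auto
  next
    assume a: "conj_sem V = (\<and>)" and o: "disj_sem V = (\<and>)"
    have "eval V (dnf n) \<Longrightarrow> eval V (clause S n)"
      using eval_dnf(3)[OF a o, of n] eval_clause(1)[OF a, of S n] unfolding eval_var_z by auto
    with d target variant o show ?thesis by auto
  next
    assume a: "conj_sem V = (\<or>)" and o: "disj_sem V = (\<or>)"
    have "eval V (clause S n) \<Longrightarrow> eval V (dnf n)"
      using eval_dnf(4)[OF a o, of n] eval_clause(2)[OF a, of S n] unfolding eval_var_z
      by (auto split: if_splits)
    with d target variant o show ?thesis by auto
  qed (use d target variant in auto)
qed

lemma variant_differs: "\<exists>V. eval V (variant n S) \<noteq> eval V (target n)"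
proof -
  have target: "eval V (target n) = disj_sem V (eval V (dnf n)) (eval V (dnf n))" for V
    unfolding target_def eval_disj ..
  have variant: "eval V (variant n S) = disj_sem V (eval V (target n)) (eval V (clause S n))" for V
    unfolding variant_def eval_disj ..
  from principal_mode show ?thesis
  proof (elim disjE exE)
    fix c0 c1 assume mode: "\<forall>V. V 0 = c0 \<longrightarrow> V 1 = c1 \<longrightarrow> conj_sem V = (\<and>) \<and> disj_sem V = (\<or>)"
    define V where "V = assignment c0 c1 (\<lambda>i. i \<in> S) (\<lambda>i. i \<notin> S)"
    have "V 0 = c0" "V 1 = c1" by (simp_all add: V_def assignment_def)
    with mode have a: "conj_sem V = (\<and>)" and o: "disj_sem V = (\<or>)" by blast+
    have xy: "V (2 * i + 2) = (i \<in> S)" "V (2 * i + 3) = (i \<notin> S)" for i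
      unfolding V_def by (simp_all only: assignment_simps)
    have "\<not> eval V (dnf n)" "eval V (clause S n)"
      unfolding eval_dnf(1)[OF a o] eval_clause(1)[OF a] eval_var_z xy by simp_all
    with o have "eval V (variant n S) \<noteq> eval V (target n)" by (simp add: target variant)
    then show ?thesis by blast
  next
    fix c0 c1 assume mode: "\<forall>V. V 0 = c0 \<longrightarrow> V 1 = c1 \<longrightarrow> conj_sem V = (\<or>) \<and> disj_sem V = (\<and>)"
    define V where "V = assignment c0 c1 (\<lambda>i. i \<notin> S) (\<lambda>i. i \<in> S)"
    have "V 0 = c0" "V 1 = c1" by (simp_all add: V_def assignment_def)
    with mode have a: "conj_sem V = (\<or>)" and o: "disj_sem V = (\<and>)" by blast+
    have xy: "V (2 * i + 2) = (i \<notin> S)" "V (2 * i + 3) = (i \<in> S)" for i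
      unfolding V_def by (simp_all only: assignment_simps)
    have "eval V (dnf n)" "\<not> eval V (clause S n)"
      unfolding eval_dnf(2)[OF a o] eval_clause(2)[OF a] eval_var_z xy by simp_all
    with o have "eval V (variant n S) \<noteq> eval V (target n)" by (simp add: target variant)
    then show ?thesis by blast
  qed
qed

lemma dag_size_dnf: "dag_size (dnf k) \<le> (conj_size + disj_size + 2) * Suc k"
proof -
  have vars: "card (subforms (var_x i) \<union> subforms (var_y i)) \<le> 2" for i
    by (simp add: var_x_def var_y_def card_insert_if)
  have gadget: "dag_size (conj (var_x i) (var_y i)) \<le> conj_size + 2" for i
    using vars[of i] dag_size_conj[of "var_x i" "var_y i"] by linarith
  show ?thesis
  proof (induction k)
    case 0
    then show ?case using gadget[of 0] by simp
  next
    case (Suc k)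
    have "dag_size (dnf (Suc k))
        \<le> disj_size + card (subforms (conj (var_x (Suc k)) (var_y (Suc k))) \<union> subforms (dnf k))"
      using dag_size_disj by simp
    also have "\<dots> \<le> disj_size + (dag_size (conj (var_x (Suc k)) (var_y (Suc k))) + dag_size (dnf k))"
      unfolding dag_size_def using card_Un_le by (simp add: add_le_mono)
    also have "\<dots> \<le> disj_size + (conj_size + 2 + (conj_size + disj_size + 2) * Suc k)"
      by (intro add_left_mono add_mono gadget Suc.IH)
    finally show ?case by simp
  qed
qed

lemma dag_size_target: "dag_size (target n) \<le> 2 * (conj_size + disj_size + 2) * (n + 1)"
proof -
  have "dag_size (target n) \<le> disj_size + dag_size (dnf n)"
    unfolding target_def using dag_size_disj[of "dnf n" "dnf n"] by (simp add: dag_size_def)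
  also have "\<dots> \<le> disj_size + (conj_size + disj_size + 2) * Suc n"
    using dag_size_dnf[of n] by simp
  also have "\<dots> \<le> 2 * (conj_size + disj_size + 2) * (n + 1)"
    by (simp add: algebra_simps)
  finally show ?thesis .
qed

theorem not_poly_characterizable: "\<not> poly_characterizable Ops"
proof
  assume "poly_characterizable Ops"
  then obtain p :: "real poly" where p: "\<And>\<phi>. in_PL Ops \<phi> \<Longrightarrow>
      \<exists>E. finite E \<and> real (card E) \<le> poly p (real (dag_size \<phi>)) \<and> uniquely_characterizes Ops E \<phi>"
    unfolding poly_characterizable_def by blast
  obtain n where n: "\<forall>x. 1 \<le> x \<longrightarrow> x \<le> real (2 * (conj_size + disj_size + 2) * (n + 1)) \<longrightarrow> poly p x < 2 ^ n"
    using poly_below_pow2 by blast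
  obtain E where E: "finite E" "real (card E) \<le> poly p (real (dag_size (target n)))"
    "uniquely_characterizes Ops E (target n)"
    using p[OF in_PL_target] by blast
  have "\<exists>e\<in>E. decoded_set n (fst e) = S" if S: "S \<subseteq> {..<Suc n}" for S
  proof -
    have "\<not> equiv_form (variant n S) (target n)"
      using variant_differs[of n S] unfolding equiv_form_def by auto
    with E(3) in_PL_variant obtain e where "e \<in> E" "\<not> fits (variant n S) e"
      unfolding uniquely_characterizes_def by blast
    moreover from this(1) E(3) have "fits (target n) e" unfolding uniquely_characterizes_def
      by blast
    ultimately show ?thesis using decoded_set_if_differ[OF S] unfolding fits_def by auto
  qed
  then have "2 ^ Suc n \<le> card E" by (rule card_ge_pow_if_covers[OF E(1)])
  then have "(2::real) ^ Suc n \<le> real (card E)" by (metis of_nat_le_iff of_nat_numeral of_nat_power)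
  also have "\<dots> \<le> poly p (real (dag_size (target n)))" by (rule E(2))
  also have "\<dots> < 2 ^ n"
    using n dag_size_pos[of "target n"] dag_size_target[of n]
    by (simp del: of_nat_mult add: of_nat_le_iff)
  finally show False by simp
qed

end

lemma dag_size_instantiate3_Var:
  assumes "in_PL Ops \<psi>" "\<forall>V. eval V \<psi> = f (V 0) (V 1) (V 2)"
  shows "dag_size (instantiate3 \<psi> (Var a) p q) \<le> (dag_size \<psi> + 1) + card (subforms p \<union> subforms q)"
proof -
  have "subforms (Var a) \<union> subforms p \<union> subforms q = insert (Var a) (subforms p \<union> subforms q)"
    by auto
  then have "card (subforms (Var a) \<union> subforms p \<union> subforms q) \<le> 1 + card (subforms p \<union> subforms q)"
    using card_insert_le_m1 by (simp add: card_insert_if finite_subforms)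
  with instantiate3(3)[OF assms, of "Var a" p q] show ?thesis by linarith
qed

lemma dag_size_instantiate3_diag:
  assumes "in_PL Ops \<psi>" "\<forall>V. eval V \<psi> = f (V 0) (V 1) (V 2)"
  shows "dag_size (instantiate3 \<psi> p q q) \<le> dag_size \<psi> + card (subforms p \<union> subforms q)"
  using instantiate3(3)[OF assms, of p q q] by (simp add: Un_absorb)

lemma maj3_const: "maj3 False a b = (a \<and> b)" "maj3 True a b = (a \<or> b)"
  by (auto simp: maj3_def)

lemma maj3_not_poly_characterizable:
  assumes "definable3 Ops maj3"
  shows "\<not> poly_characterizable Ops"
proof -
  obtain \<psi> where \<psi>: "in_PL Ops \<psi>" "\<forall>V. eval V \<psi> = maj3 (V 0) (V 1) (V 2)"
    using definable3_formula[OF assms] .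
  interpret dnf_gadgets Ops "\<lambda>p q. instantiate3 \<psi> (Var 0) p q" "\<lambda>p q. instantiate3 \<psi> (Var 1) p q"
    "\<lambda>V a b. maj3 (V 0) a b" "\<lambda>V a b. maj3 (V 1) a b" "dag_size \<psi> + 1" "dag_size \<psi> + 1"
  proof
    fix V
    show "(maj3 (V 0) = (\<and>) \<and> (maj3 (V 1) = (\<or>) \<or> maj3 (V 1) = (\<and>) \<or> maj3 (V 1) = (\<lambda>_ _. False)))
      \<or> (maj3 (V 0) = (\<or>) \<and> (maj3 (V 1) = (\<and>) \<or> maj3 (V 1) = (\<or>) \<or> maj3 (V 1) = (\<lambda>_ _. True)))"
      by (cases "V 0"; cases "V 1") (simp_all add: maj3_const fun_eq_iff)
  next
    show "(\<exists>c0 c1. \<forall>V. V 0 = c0 \<longrightarrow> V 1 = c1 \<longrightarrow> maj3 (V 0) = (\<and>) \<and> maj3 (V 1) = (\<or>))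
      \<or> (\<exists>c0 c1. \<forall>V. V 0 = c0 \<longrightarrow> V 1 = c1 \<longrightarrow> maj3 (V 0) = (\<or>) \<and> maj3 (V 1) = (\<and>))"
      by (rule disjI1, rule exI[of _ False], rule exI[of _ True]) (simp add: maj3_const fun_eq_iff)
  qed (use instantiate3[OF \<psi>] dag_size_instantiate3_Var[OF \<psi>] in auto)
  show ?thesis by (rule not_poly_characterizable)
qed

lemma and_or3_not_poly_characterizable:
  assumes "definable3 Ops and_or3"
  shows "\<not> poly_characterizable Ops"
proof -
  obtain \<psi> where \<psi>: "in_PL Ops \<psi>" "\<forall>V. eval V \<psi> = and_or3 (V 0) (V 1) (V 2)"
    using definable3_formula[OF assms] .
  interpret dnf_gadgets Ops "\<lambda>p q. instantiate3 \<psi> p q q" "\<lambda>p q. instantiate3 \<psi> (Var 0) p q"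
    "\<lambda>V a b. and_or3 a b b" "\<lambda>V a b. and_or3 (V 0) a b" "dag_size \<psi>" "dag_size \<psi> + 1"
  proof
    fix V
    show "((\<lambda>a b. and_or3 a b b) = (\<and>) \<and> (and_or3 (V 0) = (\<or>) \<or> and_or3 (V 0) = (\<and>)
        \<or> and_or3 (V 0) = (\<lambda>_ _. False)))
      \<or> ((\<lambda>a b. and_or3 a b b) = (\<or>) \<and> (and_or3 (V 0) = (\<and>) \<or> and_or3 (V 0) = (\<or>)
        \<or> and_or3 (V 0) = (\<lambda>_ _. True)))"
      by (cases "V 0") (simp_all add: and_or3_def fun_eq_iff)
  next
    show "(\<exists>c0 c1. \<forall>V. V 0 = c0 \<longrightarrow> V 1 = c1 \<longrightarrow> (\<lambda>a b. and_or3 a b b) = (\<and>) \<and> and_or3 (V 0) = (\<or>))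
      \<or> (\<exists>c0 c1. \<forall>V. V 0 = c0 \<longrightarrow> V 1 = c1 \<longrightarrow> (\<lambda>a b. and_or3 a b b) = (\<or>) \<and> and_or3 (V 0) = (\<and>))"
      by (rule disjI1, rule exI[of _ True], rule exI[of _ True]) (simp add: and_or3_def fun_eq_iff)
  qed (use instantiate3[OF \<psi>] dag_size_instantiate3_Var[OF \<psi>] dag_size_instantiate3_diag[OF \<psi>] in auto)
  show ?thesis by (rule not_poly_characterizable)
qed

lemma or_and3_not_poly_characterizable:
  assumes "definable3 Ops or_and3"
  shows "\<not> poly_characterizable Ops"
proof -
  obtain \<psi> where \<psi>: "in_PL Ops \<psi>" "\<forall>V. eval V \<psi> = or_and3 (V 0) (V 1) (V 2)"
    using definable3_formula[OF assms] .
  interpret dnf_gadgets Ops "\<lambda>p q. instantiate3 \<psi> p q q" "\<lambda>p q. instantiate3 \<psi> (Var 0) p q"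
    "\<lambda>V a b. or_and3 a b b" "\<lambda>V a b. or_and3 (V 0) a b" "dag_size \<psi>" "dag_size \<psi> + 1"
  proof
    fix V
    show "((\<lambda>a b. or_and3 a b b) = (\<and>) \<and> (or_and3 (V 0) = (\<or>) \<or> or_and3 (V 0) = (\<and>)
        \<or> or_and3 (V 0) = (\<lambda>_ _. False)))
      \<or> ((\<lambda>a b. or_and3 a b b) = (\<or>) \<and> (or_and3 (V 0) = (\<and>) \<or> or_and3 (V 0) = (\<or>)
        \<or> or_and3 (V 0) = (\<lambda>_ _. True)))"
      by (cases "V 0") (simp_all add: or_and3_def fun_eq_iff)
  next
    show "(\<exists>c0 c1. \<forall>V. V 0 = c0 \<longrightarrow> V 1 = c1 \<longrightarrow> (\<lambda>a b. or_and3 a b b) = (\<and>) \<and> or_and3 (V 0) = (\<or>))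
      \<or> (\<exists>c0 c1. \<forall>V. V 0 = c0 \<longrightarrow> V 1 = c1 \<longrightarrow> (\<lambda>a b. or_and3 a b b) = (\<or>) \<and> or_and3 (V 0) = (\<and>))"
      by (rule disjI2, rule exI[of _ False], rule exI[of _ False])
        (simp add: or_and3_def fun_eq_iff)
  qed (use instantiate3[OF \<psi>] dag_size_instantiate3_Var[OF \<psi>] dag_size_instantiate3_diag[OF \<psi>] in auto)
  show ?thesis by (rule not_poly_characterizable)
qed

lemma hard_ternary_not_poly_characterizable:
  "defines_hard_ternary Ops \<Longrightarrow> \<not> poly_characterizable Ops"
  unfolding defines_hard_ternary_def
  using maj3_not_poly_characterizable xor3_not_poly_characterizable
    and_or3_not_poly_characterizable or_and3_not_poly_characterizable by blast

theorem theorem3p20: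
  fixes Ops :: "bfun set"
  assumes "\<forall>g\<in>Ops. bfun_wf g"
  shows "(Ops \<preceq>\<^sub>c {band, btop, bbot} \<or> Ops \<preceq>\<^sub>c {bor, btop, bbot} \<or> Ops \<preceq>\<^sub>c {bneg, bbot}
            \<longrightarrow> (\<forall>\<phi>. in_PL Ops \<phi> \<longrightarrow>
                  (\<exists>E. finite E \<and> card E \<le> dag_size \<phi> + 1 \<and> uniquely_characterizes Ops E \<phi>)))
       \<and> (\<not> (Ops \<preceq>\<^sub>c {band, btop, bbot} \<or> Ops \<preceq>\<^sub>c {bor, btop, bbot} \<or> Ops \<preceq>\<^sub>c {bneg, bbot})
            \<longrightarrow> \<not> (\<exists>p :: real poly. \<forall>\<phi>. in_PL Ops \<phi> \<longrightarrow>
                  (\<exists>E. finite E \<and> real (card E) \<le> poly p (real (dag_size \<phi>))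
                       \<and> uniquely_characterizes Ops E \<phi>)))"
proof (intro conjI impI allI)
  fix \<phi> assume "Ops \<preceq>\<^sub>c {band, btop, bbot} \<or> Ops \<preceq>\<^sub>c {bor, btop, bbot} \<or> Ops \<preceq>\<^sub>c {bneg, bbot}"
    and "in_PL Ops \<phi>"
  then show "\<exists>E. finite E \<and> card E \<le> dag_size \<phi> + 1 \<and> uniquely_characterizes Ops E \<phi>"
    using characterizing_set_if_below_conj characterizing_set_if_below_disj characterizing_set_if_below_neg
    by blast
next
  assume "\<not> (Ops \<preceq>\<^sub>c {band, btop, bbot} \<or> Ops \<preceq>\<^sub>c {bor, btop, bbot} \<or> Ops \<preceq>\<^sub>c {bneg, bbot})"
  then have not_below: "\<not> Ops \<preceq>\<^sub>c {band, btop, bbot}" "\<not> Ops \<preceq>\<^sub>c {bor, btop, bbot}"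
    "\<not> Ops \<preceq>\<^sub>c {bneg, bbot}"
    by simp_all
  obtain F1 where "definable Ops F1" "\<not> preserves (\<and>) F1"
    using definable_outside_if_not_below[OF assms not_below(1) clone_conj_complete] .
  moreover obtain F2 where "definable Ops F2" "\<not> preserves (\<or>) F2"
    using definable_outside_if_not_below[OF assms not_below(2) clone_disj_complete] .
  moreover obtain F3 where "definable Ops F3" "\<not> essentially_unary F3"
    using definable_outside_if_not_below[OF assms not_below(3) clone_unary_complete] .
  ultimately have "defines_hard_ternary Ops" by (rule hard_if_not_conj_disj_unary)
  then show "\<not> (\<exists>p :: real poly. \<forall>\<phi>. in_PL Ops \<phi> \<longrightarrow>
      (\<exists>E. finite E \<and> real (card E) \<le> poly p (real (dag_size \<phi>)) \<and> uniquely_characterizes Ops E \<phi>))"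
    using hard_ternary_not_poly_characterizable unfolding poly_characterizable_def by blast
qed

end
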